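(* Let $L \geq 3$ be an odd integer and set $k = \frac{L-1}{2}$. Fix a discrete memoryless channel $P_{Y|X}\colon \mathcal{X}\to\mathcal{Y}$, a distribution $P_X$ on $\mathcal{X}$, control symbols $x_{\mathsf{A}}, x_{\mathsf{R}} \in \mathcal{X}$, positive integers $M$ and $n_1 < n_2 < \dots < n_L$, and type-I error probabilities $\epsilon^{(i)} \in (0,1)$ for $i \in [k]$. Set $n_0 = 0$ and $n_{L+1} = n_L$, and define $$\beta^{(i)} \triangleq \beta_{\epsilon^{(i)}}\left(P_{Y|X=x_{\mathsf{A}}}^{\,n_{2i}-n_{2i-1}} \,\middle\|\, P_{Y|X=x_{\mathsf{R}}}^{\,n_{2i}-n_{2i-1}}\right), \quad i \in [k],$$ $$p^{(0)} \triangleq 1, \qquad p^{(i)} \triangleq \max\{\epsilon^{(i)}, 1-\beta^{(i)}\}, \quad i \in [k].$$ Then there exists an $(N, L, M, \epsilon)$-VLBF code with feedback times $n_1,\dots,n_L$ satisfying $$N \leq n_2 + \sum_{j=1}^{k} (n_{2j+2}-n_{2j})\left(\mathrm{rcu}\Big(\sum_{i=1}^{j} (n_{2i-1}-n_{2i-2}), M\Big)\big(1-\beta^{(j)}\big) + \epsilon^{(j)}\right)\prod_{i=0}^{j-1} p^{(i)},$$ $$\epsilon \leq \sum_{j=1}^{k} \mathrm{rcu}\Big(\sum_{i=1}^{j} (n_{2i-1}-n_{2i-2}), M\Big)\,\beta^{(j)} \prod_{i=0}^{j-1} p^{(i)} + \mathrm{rcu}\Big(\sum_{i=1}^{k+1}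 (n_{2i-1}-n_{2i-2}), M\Big)\prod_{i=0}^{k} p^{(i)}.$$ (That is, there is a VLBF code with $M$ messages and feedback times $n_1<\dots<n_L$ whose expected decoding time is at most the first right-hand side and whose average error probability is at most the second right-hand side.)
   Context: Notation: $[n]=\{1,\dots,n\}$; $x^n=(x_1,\dots,x_n)$. A discrete memoryless channel (DMC) with finite input alphabet $\mathcal{X}$ and output alphabet $\mathcal{Y}$ is given by a transition kernel $P_{Y|X}$ and acts as $P_{Y^n|X^n}(y^n|x^n)=\prod_{i=1}^n P_{Y|X}(y_i|x_i)$. For $x\in\mathcal{X}$ and an integer $m\ge 1$, $P^{m}_{Y|X=x}$ denotes the product distribution on $\mathcal{Y}^m$ of $m$ i.i.d. outputs with input $x$. VLBF code: Given $\epsilon\in(0,1)$, $N>0$, and positive integers $M$ and $n_1<\dots<n_L$, an $(N,L,M,\epsilon)$ variable-length bursty-feedback (VLBF) code consists of: (1) a common randomness random variable $U$ with finite alphabet $\mathcal{U}$ and distribution $P_U$, known to transmitter and receiver before transmission; (2) encoding functions $\mathsf{f}_n\colon \mathcal{U}\times[M]\times\mathcal{Y}^{h(n-1)}\to\mathcal{X}$, $n=1,\dots,n_L$, where $h(n)\triangleq\max\{t\in\{0,n_1,\dots,n_L\}\colon t\le n\}$, producing channel inputs $X_n=\mathsf{f}_n(U,W,Y^{h(n-1)})$ (so the transmitter learns the past channel outputs only at the times $n_1,\dots,n_L$); (3) a stopping time $\tau\in\{n_1,\dots,n_L\}$ of the filtration generated by $\{U,Y^{n_i}\}_{i=1}^L$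 with $\mathbb{E}[\tau]\le N$; (4) decoding functions $\mathsf{g}_{n_i}\colon\mathcal{U}\times\mathcal{Y}^{n_i}\to[M]$, $i\in[L]$, with estimate $\hat W=\mathsf{g}_\tau(U,Y^\tau)$, such that when the message $W$ is uniform on $[M]$, $\mathbb{P}[\hat W\ne W]\le\epsilon$. RCU function: for integer $n\ge1$ and $M$, with $P_{X^n}=P_X^{n}$ (i.i.d. $P_X$), $$\mathrm{rcu}(n,M)\triangleq\mathbb{E}\left[\min\left\{1,(M-1)\,\mathbb{P}\left[\iota(\bar X^n;Y^n)\ge\iota(X^n;Y^n)\,\middle|\,X^n,Y^n\right]\right\}\right],$$ where $(X^n,\bar X^n,Y^n)$ has joint distribution $P_{X^n}(x^n)P_{X^n}(\bar x^n)P_{Y^n|X^n}(y^n|x^n)$, and $\iota(x^n;y^n)=\log\frac{P_{Y^n|X^n}(y^n|x^n)}{P_{Y^n}(y^n)}$ with $P_{Y^n}$ the output distribution induced by $P_{X^n}$. Binary hypothesis testing: for distributions $P_{\mathsf{A}},P_{\mathsf{R}}$ on a common finite alphabet, a randomized test is a kernel $P_{B|X}$ to $\{\mathsf{A},\mathsf{R}\}$, and $\beta_\epsilon(P_{\mathsf{A}}\|P_{\mathsf{R}})\triangleq\min\{\mathbb{P}[B=\mathsf{A}\mid X\sim P_{\mathsf{R}}]\colon \mathbb{P}[B=\mathsf{R}\mid X\sim P_{\mathsf{A}}]\le\epsilon\}$, the minimum type-II error probability subject to type-I error probability at most $\epsilon$. *)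

theory Defs
  imports "HOL-Analysis.Analysis" "HOL-Library.Extended_Real"
begin

definition seqs :: "nat \<Rightarrow> 'a list set" where
  "seqs m = {xs. length xs = m}"

definition chan_n :: "('x \<Rightarrow> 'y \<Rightarrow> real) \<Rightarrow> 'x list \<Rightarrow> 'y list \<Rightarrow> real" where
  "chan_n W xs ys = prod_list (map2 W xs ys)"

definition chan_pow :: "('x \<Rightarrow> 'y \<Rightarrow> real) \<Rightarrow> 'x \<Rightarrow> 'y list \<Rightarrow> real" where
  "chan_pow W x ys = prod_list (map (W x) ys)"

definition iid :: "('x \<Rightarrow> real) \<Rightarrow> 'x list \<Rightarrow> real" where
  "iid PX xs = prod_list (map PX xs)"

definition out_dist :: "('x::finite \<Rightarrow> 'y \<Rightarrow> real) \<Rightarrow> ('x \<Rightarrow> real) \<Rightarrow> nat \<Rightarrow> 'y list \<Rightarrow> real" where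
  "out_dist W PX n ys = (\<Sum>xs\<in>seqs n. iid PX xs * chan_n W xs ys)"

definition info_dens :: "('x::finite \<Rightarrow> 'y \<Rightarrow> real) \<Rightarrow> ('x \<Rightarrow> real) \<Rightarrow> nat \<Rightarrow> 'x list \<Rightarrow> 'y list \<Rightarrow> ereal" where
  "info_dens W PX n xs ys =
     (let r = chan_n W xs ys / out_dist W PX n ys in if r = 0 then -\<infinity> else ereal (ln r))"

definition rcu :: "('x::finite \<Rightarrow> 'y::finite \<Rightarrow> real) \<Rightarrow> ('x \<Rightarrow> real) \<Rightarrow> nat \<Rightarrow> nat \<Rightarrow> real" where
  "rcu W PX n M =
     (\<Sum>xs\<in>seqs n. \<Sum>ys\<in>seqs n. iid PX xs * chan_n W xs ys *
        min 1 ((real M - 1) *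
          (\<Sum>xb\<in>seqs n. iid PX xb *
             (if info_dens W PX n xb ys \<ge> info_dens W PX n xs ys then 1 else 0))))"

text \<open>beta_eps(PA || PR) on the finite alphabet A; a randomized test is given by
  T a = probability of deciding A (accept) on observation a.\<close>
definition hyp_beta :: "'a set \<Rightarrow> real \<Rightarrow> ('a \<Rightarrow> real) \<Rightarrow> ('a \<Rightarrow> real) \<Rightarrow> real" where
  "hyp_beta A eps PA PR =
     Inf {(\<Sum>a\<in>A. PR a * T a) | T. (\<forall>a\<in>A. 0 \<le> T a \<and> T a \<le> 1) \<and>
                                    (\<Sum>a\<in>A. PA a * (1 - T a)) \<le> eps}"

definition fb_h :: "nat \<Rightarrow> (nat \<Rightarrow> nat) \<Rightarrow> nat \<Rightarrow> nat" where
  "fb_h L n m = Max ({0} \<union> {n i | i. 1 \<le> i \<and> i \<le> L \<and> n i \<le> m})"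

text \<open>Channel input at time j+1: X_{j+1} = f_{j+1}(U, W, Y^{h(j)}).
  The encoder f has arguments (time, u, message, past outputs).\<close>
definition enc_in :: "nat \<Rightarrow> (nat \<Rightarrow> nat) \<Rightarrow> (nat \<Rightarrow> nat \<Rightarrow> nat \<Rightarrow> 'y list \<Rightarrow> 'x)
    \<Rightarrow> nat \<Rightarrow> nat \<Rightarrow> 'y list \<Rightarrow> nat \<Rightarrow> 'x" where
  "enc_in L n f u w ys j = f (Suc j) u w (take (fb_h L n j) ys)"

definition joint_prob :: "('x \<Rightarrow> 'y \<Rightarrow> real) \<Rightarrow> nat \<Rightarrow> (nat \<Rightarrow> nat) \<Rightarrow> nat \<Rightarrow> (nat \<Rightarrow> real)
    \<Rightarrow> (nat \<Rightarrow> nat \<Rightarrow> nat \<Rightarrow> 'y list \<Rightarrow> 'x) \<Rightarrow> nat \<Rightarrow> nat \<Rightarrow> 'y list \<Rightarrow> real" where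
  "joint_prob W L n M PU f u w ys =
     PU u * (1 / real M) * (\<Prod>j<n L. W (enc_in L n f u w ys j) (ys ! j))"

text \<open>Stopping time: a stopping time of the filtration generated by (U, Y^{n_i}) with values
  in {n_1..n_L} is given by stopping rules stop i u y^{n_i} (i in [L]); tau = n_{idx} where
  idx is the first i with stop i u (Y^{n_i}) true, or L if none.\<close>
definition stop_idx :: "nat \<Rightarrow> (nat \<Rightarrow> nat) \<Rightarrow> (nat \<Rightarrow> nat \<Rightarrow> 'y list \<Rightarrow> bool)
    \<Rightarrow> nat \<Rightarrow> 'y list \<Rightarrow> nat" where
  "stop_idx L n stop u ys = (LEAST i. 1 \<le> i \<and> (i = L \<or> stop i u (take (n i) ys)))"

definition exp_tau :: "('x \<Rightarrow> 'y::finite \<Rightarrow> real) \<Rightarrow> nat \<Rightarrow> (nat \<Rightarrow> nat) \<Rightarrow> nat \<Rightarrow> nat set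
    \<Rightarrow> (nat \<Rightarrow> real) \<Rightarrow> (nat \<Rightarrow> nat \<Rightarrow> nat \<Rightarrow> 'y list \<Rightarrow> 'x)
    \<Rightarrow> (nat \<Rightarrow> nat \<Rightarrow> 'y list \<Rightarrow> bool) \<Rightarrow> real" where
  "exp_tau W L n M Us PU f stop =
     (\<Sum>u\<in>Us. \<Sum>w\<in>{1..M}. \<Sum>ys\<in>seqs (n L).
        joint_prob W L n M PU f u w ys * real (n (stop_idx L n stop u ys)))"

definition err_prob :: "('x \<Rightarrow> 'y::finite \<Rightarrow> real) \<Rightarrow> nat \<Rightarrow> (nat \<Rightarrow> nat) \<Rightarrow> nat \<Rightarrow> nat set
    \<Rightarrow> (nat \<Rightarrow> real) \<Rightarrow> (nat \<Rightarrow> nat \<Rightarrow> nat \<Rightarrow> 'y list \<Rightarrow> 'x)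
    \<Rightarrow> (nat \<Rightarrow> nat \<Rightarrow> 'y list \<Rightarrow> bool) \<Rightarrow> (nat \<Rightarrow> nat \<Rightarrow> 'y list \<Rightarrow> nat) \<Rightarrow> real" where
  "err_prob W L n M Us PU f stop g =
     (\<Sum>u\<in>Us. \<Sum>w\<in>{1..M}. \<Sum>ys\<in>seqs (n L).
        joint_prob W L n M PU f u w ys *
        (let i = stop_idx L n stop u ys in if g i u (take (n i) ys) \<noteq> w then 1 else 0))"

text \<open>Well-formedness of the code components: common randomness U with finite alphabet Us and
  distribution PU; decoders g i u y^{n_i} with values in [M].\<close>
definition vlbf_valid :: "nat \<Rightarrow> (nat \<Rightarrow> nat) \<Rightarrow> nat \<Rightarrow> nat set \<Rightarrow> (nat \<Rightarrow> real)
    \<Rightarrow> (nat \<Rightarrow> nat \<Rightarrow> 'y list \<Rightarrow> nat) \<Rightarrow> bool" where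
  "vlbf_valid L n M Us PU g \<longleftrightarrow>
     finite Us \<and> (\<forall>u\<in>Us. 0 \<le> PU u) \<and> (\<Sum>u\<in>Us. PU u) = 1 \<and>
     (\<forall>i\<in>{1..L}. \<forall>u\<in>Us. \<forall>ys. length ys = n i \<longrightarrow> g i u ys \<in> {1..M})"

definition is_vlbf_code :: "('x \<Rightarrow> 'y::finite \<Rightarrow> real) \<Rightarrow> real \<Rightarrow> nat \<Rightarrow> nat \<Rightarrow> real \<Rightarrow> (nat \<Rightarrow> nat)
    \<Rightarrow> nat set \<Rightarrow> (nat \<Rightarrow> real) \<Rightarrow> (nat \<Rightarrow> nat \<Rightarrow> nat \<Rightarrow> 'y list \<Rightarrow> 'x)
    \<Rightarrow> (nat \<Rightarrow> nat \<Rightarrow> 'y list \<Rightarrow> bool) \<Rightarrow> (nat \<Rightarrow> nat \<Rightarrow> 'y list \<Rightarrow> nat) \<Rightarrow> bool" where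
  "is_vlbf_code W N L M eps n Us PU f stop g \<longleftrightarrow>
     vlbf_valid L n M Us PU g \<and>
     exp_tau W L n M Us PU f stop \<le> N \<and>
     err_prob W L n M Us PU f stop g \<le> eps"

end

theory Submission
  imports Defs
begin

text \<open>The block is cut at the feedback times into segments. The odd segments carry successive
  chunks of a codeword drawn i.i.d. from \<open>PX\<close>. Just before the even segment \<open>2 j\<close> the transmitter
  learns from the feedback the receiver's maximum information density decision based on all data
  outputs so far, and repeats \<open>xA\<close> during that segment if the decision is right and \<open>xR\<close> if it
  is wrong; the receiver then tests \<open>xA\<close> against \<open>xR\<close> at level \<open>eps j\<close> and stops at \<open>n (2 j)\<close>
  if the test accepts. Given the past, stage \<open>j\<close> fails to stop with probability at most
  \<open>eps j\<close> after a right decision and \<open>1 - \<beta> j\<close> after a wrong one, and stops with a wrong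
  decision with probability \<open>\<beta> j\<close>. Since the data outputs are distributed as if the codeword
  prefix had been sent in one go, the random-coding union bound, averaged over the codebook (part
  of the common randomness together with the coins of the tests), bounds the probability of a
  wrong decision at stage \<open>j\<close> by \<open>rcu (s j) M\<close>. Summing over the stage at which the receiver
  stops gives both bounds.\<close>

section \<open>Fixed-length sequences and memoryless products\<close>

lemma mem_seqs_iff [simp]: "xs \<in> seqs m \<longleftrightarrow> length xs = m"
  by (simp add: seqs_def)

lemma finite_seqs [simp, intro]: "finite (seqs m :: 'a::finite list set)"
  unfolding seqs_def using finite_lists_length_eq[of "UNIV :: 'a set" m] by simp

lemma seqs_0: "seqs 0 = {[]}"
  by (auto simp: seqs_def)

lemma sum_seqs_append:
  fixes F :: "'a list \<Rightarrow> 'b::comm_monoid_add"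
  shows "(\<Sum>ys\<in>seqs (a + b). F ys) = (\<Sum>p\<in>seqs a. \<Sum>q\<in>seqs b. F (p @ q))"
proof -
  have bij: "bij_betw (\<lambda>(p, q). p @ q) (seqs a \<times> seqs b) (seqs (a + b))"
  proof (rule bij_betw_imageI)
    show "inj_on (\<lambda>(p, q). p @ q) (seqs a \<times> seqs b)"
      by (auto simp: inj_on_def)
    show "(\<lambda>(p, q). p @ q) ` (seqs a \<times> seqs b) = seqs (a + b)"
    proof (intro equalityI subsetI)
      fix ys assume "ys \<in> seqs (a + b)"
      then show "ys \<in> (\<lambda>(p, q). p @ q) ` (seqs a \<times> seqs b)"
        by (intro image_eqI[of _ _ "(take a ys, drop a ys)"]) auto
    qed auto
  qed
  show ?thesis
    by (simp add: sum.reindex_bij_betw[OF bij, symmetric] sum.cartesian_product split_def)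
qed

lemma sum_seqs_Suc:
  fixes F :: "'a list \<Rightarrow> 'b::comm_monoid_add"
  shows "(\<Sum>ys\<in>seqs (Suc m). F ys) = (\<Sum>p\<in>seqs m. \<Sum>y\<in>UNIV. F (p @ [y]))"
proof -
  have singletons: "seqs 1 = range (\<lambda>y. [y])"
    by (auto simp: length_Suc_conv)
  have "(\<Sum>q\<in>seqs 1. G q) = (\<Sum>y\<in>UNIV. G [y])" for G :: "'a list \<Rightarrow> 'b"
    unfolding singletons by (subst sum.reindex) (auto simp: inj_def)
  then show ?thesis
    using sum_seqs_append[of F m 1] by simp
qed

lemma sum_seqs_prod_stochastic:
  fixes Q :: "nat \<Rightarrow> 'a::finite \<Rightarrow> real"
  assumes "\<And>i. (\<Sum>y\<in>UNIV. Q i y) = 1"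
  shows "(\<Sum>ys\<in>seqs m. \<Prod>i<m. Q i (ys ! i)) = 1"
proof (induction m)
  case 0
  then show ?case by (simp add: seqs_0)
next
  case (Suc m)
  have "(\<Sum>ys\<in>seqs (Suc m). \<Prod>i<Suc m. Q i (ys ! i))
      = (\<Sum>p\<in>seqs m. \<Sum>y\<in>UNIV. (\<Prod>i<m. Q i (p ! i)) * Q m y)"
    unfolding sum_seqs_Suc
    by (intro sum.cong refl) (auto simp: nth_append intro!: prod.cong)
  also have "\<dots> = 1"
    by (simp add: sum_distrib_left[symmetric] assms Suc.IH)
  finally show ?case .
qed

lemma prod_lessThan_add:
  "(\<Prod>j<a + b. f j) = (\<Prod>j<a. f j) * (\<Prod>i<b. f (a + i))"
  for f :: "nat \<Rightarrow> 'a::comm_monoid_mult"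
  by (induction b) (simp_all add: mult.assoc)

lemma prod_list_map2_conv_prod:
  "length xs = m \<Longrightarrow> length ys = m \<Longrightarrow> prod_list (map2 f xs ys) = (\<Prod>i<m. f (xs ! i) (ys ! i))"
proof (induction m arbitrary: xs ys)
  case (Suc m)
  then obtain x xs' y ys' where "xs = x # xs'" "ys = y # ys'" "length xs' = m" "length ys' = m"
    by (metis length_Suc_conv)
  with Suc.IH[of xs' ys'] show ?case
    by (simp del: prod.lessThan_Suc add: prod.lessThan_Suc_shift)
qed simp

lemma prod_list_map_conv_prod:
  "length xs = m \<Longrightarrow> prod_list (map f xs) = (\<Prod>i<m. f (xs ! i))"
  using prod_list_map2_conv_prod[of xs m xs "\<lambda>x _. f x"] by (simp add: zip_same_conv_map o_def)

lemma chan_n_conv_prod: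
  "length xs = m \<Longrightarrow> length ys = m \<Longrightarrow> chan_n W xs ys = (\<Prod>i<m. W (xs ! i) (ys ! i))"
  unfolding chan_n_def by (rule prod_list_map2_conv_prod)

lemma chan_n_append:
  "length xs = length ys \<Longrightarrow> chan_n W (xs @ xs') (ys @ ys') = chan_n W xs ys * chan_n W xs' ys'"
  unfolding chan_n_def by simp

lemma iid_append: "iid PX (xs @ ys) = iid PX xs * iid PX ys"
  unfolding iid_def by simp

lemma chan_n_nonneg: "(\<And>x y. 0 \<le> W x y) \<Longrightarrow> 0 \<le> chan_n W xs ys"
  unfolding chan_n_def by (intro prod_list_nonneg) auto

lemma chan_pow_nonneg: "(\<And>x y. 0 \<le> W x y) \<Longrightarrow> 0 \<le> chan_pow W x ys"
  unfolding chan_pow_def by (intro prod_list_nonneg) auto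

lemma iid_nonneg: "(\<And>x. 0 \<le> PX x) \<Longrightarrow> 0 \<le> iid PX xs"
  unfolding iid_def by (intro prod_list_nonneg) auto

lemma sum_chan_n:
  fixes W :: "'x \<Rightarrow> 'y::finite \<Rightarrow> real"
  assumes "\<And>x. (\<Sum>y\<in>UNIV. W x y) = 1" and "length xs = m"
  shows "(\<Sum>ys\<in>seqs m. chan_n W xs ys) = 1"
proof -
  have "(\<Sum>ys\<in>seqs m. chan_n W xs ys) = (\<Sum>ys\<in>seqs m. \<Prod>i<m. W (xs ! i) (ys ! i))"
    using assms(2) by (intro sum.cong refl chan_n_conv_prod) auto
  also have "\<dots> = 1"
    by (rule sum_seqs_prod_stochastic) (simp add: assms(1))
  finally show ?thesis .
qed

lemma sum_chan_pow:
  fixes W :: "'x \<Rightarrow> 'y::finite \<Rightarrow> real"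
  assumes "\<And>x. (\<Sum>y\<in>UNIV. W x y) = 1"
  shows "(\<Sum>ys\<in>seqs m. chan_pow W x ys) = 1"
proof -
  have "(\<Sum>ys\<in>seqs m. chan_pow W x ys) = (\<Sum>ys\<in>seqs m. \<Prod>i<m. W x (ys ! i))"
    unfolding chan_pow_def by (intro sum.cong refl prod_list_map_conv_prod) auto
  also have "\<dots> = 1"
    by (rule sum_seqs_prod_stochastic) (simp add: assms)
  finally show ?thesis .
qed

lemma sum_iid:
  fixes PX :: "'x::finite \<Rightarrow> real"
  assumes "(\<Sum>x\<in>UNIV. PX x) = 1"
  shows "(\<Sum>xs\<in>seqs m. iid PX xs) = 1"
proof -
  have "(\<Sum>xs\<in>seqs m. iid PX xs) = (\<Sum>xs\<in>seqs m. \<Prod>i<m. PX (xs ! i))"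
    unfolding iid_def by (intro sum.cong refl prod_list_map_conv_prod) auto
  also have "\<dots> = 1"
    by (rule sum_seqs_prod_stochastic) (simp add: assms)
  finally show ?thesis .
qed

lemma sum_iid_take:
  fixes PX :: "'x::finite \<Rightarrow> real"
  assumes "(\<Sum>x\<in>UNIV. PX x) = 1" and "m \<le> m'"
  shows "(\<Sum>c\<in>seqs m'. iid PX c * G (take m c)) = (\<Sum>c\<in>seqs m. iid PX c * G c)"
proof -
  have "(\<Sum>c\<in>seqs m'. iid PX c * G (take m c)) = (\<Sum>c\<in>seqs (m + (m' - m)). iid PX c * G (take m c))"
    using assms(2) by simp
  also have "\<dots> = (\<Sum>p\<in>seqs m. \<Sum>q\<in>seqs (m' - m). iid PX p * G p * iid PX q)"
    unfolding sum_seqs_append by (intro sum.cong refl) (simp add: iid_append)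
  also have "\<dots> = (\<Sum>p\<in>seqs m. iid PX p * G p)"
    by (simp add: sum_distrib_left[symmetric] sum_iid[OF assms(1)])
  finally show ?thesis .
qed

section \<open>Optimal randomized tests\<close>

lemma bounded_funseq_convergent_subseq:
  fixes f :: "nat \<Rightarrow> 'a \<Rightarrow> real"
  assumes "finite A" and bound: "\<And>m a. a \<in> A \<Longrightarrow> \<bar>f m a\<bar> \<le> B"
  obtains l r where "strict_mono r" and "\<And>a. a \<in> A \<Longrightarrow> (\<lambda>m. f (r m) a) \<longlonglongrightarrow> l a"
proof -
  have "\<forall>D\<subseteq>A. \<exists>l r. strict_mono r \<and>
      (\<forall>e>0. \<forall>\<^sub>F m in sequentially. \<forall>a\<in>D. dist (f (r m) a) (l a) < e)"
    by (rule compact_lemma_general[where proj = "\<lambda>x a. x a" and unproj = "\<lambda>x. x"])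
      (use assms in \<open>auto simp: bounded_iff\<close>)
  then obtain l r where r: "strict_mono r"
    and conv: "\<And>e. e > 0 \<Longrightarrow> \<forall>\<^sub>F m in sequentially. \<forall>a\<in>A. dist (f (r m) a) (l a) < e"
    by blast
  have "(\<lambda>m. f (r m) a) \<longlonglongrightarrow> l a" if "a \<in> A" for a
    unfolding tendsto_iff
  proof (intro allI impI)
    fix e :: real assume "e > 0"
    from conv[OF this] show "\<forall>\<^sub>F m in sequentially. dist (f (r m) a) (l a) < e"
      by (rule eventually_mono) (use that in blast)
  qed
  with r that show ?thesis by blast
qed

lemma hyp_beta_minimizing_tests:
  fixes PA PR :: "'a \<Rightarrow> real"
  assumes PR_nonneg: "\<And>a. 0 \<le> PR a" and "0 \<le> eps"
  obtains Tm where "\<And>m a. a \<in> A \<Longrightarrow> 0 \<le> Tm m a \<and> Tm m a \<le> 1"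
    and "\<And>m. (\<Sum>a\<in>A. PA a * (1 - Tm m a)) \<le> eps"
    and "(\<lambda>m. \<Sum>a\<in>A. PR a * Tm m a) \<longlonglongrightarrow> hyp_beta A eps PA PR"
proof -
  define feasible where "feasible T \<longleftrightarrow>
    (\<forall>a\<in>A. 0 \<le> T a \<and> T a \<le> 1) \<and> (\<Sum>a\<in>A. PA a * (1 - T a)) \<le> eps" for T :: "'a \<Rightarrow> real"
  define errs where "errs = {(\<Sum>a\<in>A. PR a * T a) | T. feasible T}"
  define \<beta> where "\<beta> = Inf errs"
  have \<beta>: "hyp_beta A eps PA PR = \<beta>"
    unfolding hyp_beta_def \<beta>_def errs_def feasible_def by simp
  have "feasible (\<lambda>_. 1)"
    unfolding feasible_def using \<open>0 \<le> eps\<close> by simp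
  then have errs_ne: "errs \<noteq> {}"
    unfolding errs_def by blast
  have "bdd_below errs"
    unfolding errs_def feasible_def bdd_below_def
    using PR_nonneg by (auto intro!: exI[of _ 0] sum_nonneg)
  then have \<beta>_le: "\<beta> \<le> (\<Sum>a\<in>A. PR a * T a)" if "feasible T" for T
    unfolding \<beta>_def errs_def using that by (auto intro: cInf_lower)
  have "\<exists>x\<in>errs. x < \<beta> + inverse (real (Suc m))" for m
    using cInf_lessD[OF errs_ne, of "\<beta> + inverse (real (Suc m))"] by (auto simp: \<beta>_def)
  then have "\<exists>T. feasible T \<and> (\<Sum>a\<in>A. PR a * T a) < \<beta> + inverse (real (Suc m))" for m
    unfolding errs_def by blast
  then obtain Tm where Tm: "\<And>m. feasible (Tm m)"
    and Tm_less: "\<And>m. (\<Sum>a\<in>A. PR a * Tm m a) < \<beta> + inverse (real (Suc m))"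
    by metis
  have "(\<lambda>m. \<beta> + inverse (real (Suc m))) \<longlonglongrightarrow> \<beta>"
    using tendsto_add[OF tendsto_const LIMSEQ_inverse_real_of_nat, of \<beta>] by simp
  then have lim: "(\<lambda>m. \<Sum>a\<in>A. PR a * Tm m a) \<longlonglongrightarrow> \<beta>"
  proof (rule tendsto_sandwich[rotated 3])
    show "\<forall>\<^sub>F m in sequentially. \<beta> \<le> (\<Sum>a\<in>A. PR a * Tm m a)"
      using \<beta>_le Tm by simp
    show "\<forall>\<^sub>F m in sequentially. (\<Sum>a\<in>A. PR a * Tm m a) \<le> \<beta> + inverse (real (Suc m))"
      using Tm_less by (simp add: less_imp_le)
  qed simp
  show ?thesis
  proof (rule that)
    show "0 \<le> Tm m a \<and> Tm m a \<le> 1" if "a \<in> A" for m a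
      using Tm[of m] that unfolding feasible_def by blast
    show "(\<Sum>a\<in>A. PA a * (1 - Tm m a)) \<le> eps" for m
      using Tm[of m] unfolding feasible_def by blast
    show "(\<lambda>m. \<Sum>a\<in>A. PR a * Tm m a) \<longlonglongrightarrow> hyp_beta A eps PA PR"
      unfolding \<beta> by (rule lim)
  qed
qed

text \<open>A pointwise limit of a minimizing sequence of tests is again a test of the same level.\<close>

lemma hyp_beta_attained:
  fixes PA PR :: "'a \<Rightarrow> real"
  assumes "finite A" and "\<And>a. 0 \<le> PR a" and "0 \<le> eps"
  shows "\<exists>T. (\<forall>a. 0 \<le> T a \<and> T a \<le> 1) \<and> (\<Sum>a\<in>A. PA a * (1 - T a)) \<le> eps \<and>
           (\<Sum>a\<in>A. PR a * T a) = hyp_beta A eps PA PR"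
proof -
  obtain Tm where Tm: "\<And>m a. a \<in> A \<Longrightarrow> 0 \<le> Tm m a \<and> Tm m a \<le> 1"
    and type_I: "\<And>m. (\<Sum>a\<in>A. PA a * (1 - Tm m a)) \<le> eps"
    and lim_\<beta>: "(\<lambda>m. \<Sum>a\<in>A. PR a * Tm m a) \<longlonglongrightarrow> hyp_beta A eps PA PR"
    using hyp_beta_minimizing_tests[where A = A and PA = PA and PR = PR and eps = eps, OF assms(2,3)] by blast
  obtain l r where r: "strict_mono r" and lim: "\<And>a. a \<in> A \<Longrightarrow> (\<lambda>m. Tm (r m) a) \<longlonglongrightarrow> l a"
  proof (rule bounded_funseq_convergent_subseq[OF \<open>finite A\<close>, of Tm 1])
    show "\<bar>Tm m a\<bar> \<le> 1" if "a \<in> A" for m a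
      using Tm[OF that, of m] by auto
  qed blast
  define T where "T a = (if a \<in> A then l a else 0)" for a
  have T_range: "0 \<le> T a \<and> T a \<le> 1" for a
  proof (cases "a \<in> A")
    case True
    then have "\<forall>m. 0 \<le> Tm (r m) a \<and> Tm (r m) a \<le> 1"
      using Tm by blast
    with lim[OF True] show ?thesis
      unfolding T_def using True by (auto intro: LIMSEQ_le_const LIMSEQ_le_const2)
  qed (simp add: T_def)
  have T_on_A: "(\<Sum>a\<in>A. PA a * (1 - T a)) = (\<Sum>a\<in>A. PA a * (1 - l a))"
    "(\<Sum>a\<in>A. PR a * T a) = (\<Sum>a\<in>A. PR a * l a)"
    unfolding T_def by (auto intro: sum.cong)
  have "(\<lambda>m. \<Sum>a\<in>A. PA a * (1 - Tm (r m) a)) \<longlonglongrightarrow> (\<Sum>a\<in>A. PA a * (1 - l a))"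
    by (intro tendsto_sum tendsto_mult tendsto_diff tendsto_const lim)
  then have "(\<Sum>a\<in>A. PA a * (1 - T a)) \<le> eps"
    unfolding T_on_A using type_I by (auto intro: LIMSEQ_le_const2)
  moreover have "(\<lambda>m. \<Sum>a\<in>A. PR a * Tm (r m) a) \<longlonglongrightarrow> (\<Sum>a\<in>A. PR a * T a)"
    unfolding T_on_A by (intro tendsto_sum tendsto_mult tendsto_const lim)
  moreover have "(\<lambda>m. \<Sum>a\<in>A. PR a * Tm (r m) a) \<longlonglongrightarrow> hyp_beta A eps PA PR"
    using LIMSEQ_subseq_LIMSEQ[OF lim_\<beta> r] by (simp add: o_def)
  ultimately show ?thesis
    using T_range LIMSEQ_unique by blast
qed

section \<open>Output probabilities under bursty feedback\<close>

definition path_prob :: "('x \<Rightarrow> 'y \<Rightarrow> real) \<Rightarrow> nat \<Rightarrow> (nat \<Rightarrow> nat) \<Rightarrow>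
    (nat \<Rightarrow> 'u \<Rightarrow> nat \<Rightarrow> 'y list \<Rightarrow> 'x) \<Rightarrow> 'u \<Rightarrow> nat \<Rightarrow> nat \<Rightarrow> 'y list \<Rightarrow> real" where
  "path_prob W L n f u w m ys = (\<Prod>j<m. W (f (Suc j) u w (take (fb_h L n j) ys)) (ys ! j))"

lemma path_prob_nonneg: "(\<And>x y. 0 \<le> W x y) \<Longrightarrow> 0 \<le> path_prob W L n f u w m ys"
  unfolding path_prob_def by (intro prod_nonneg) auto

lemma fb_h_le: "fb_h L n j \<le> j"
proof -
  have "finite ({0} \<union> {n i | i. 1 \<le> i \<and> i \<le> L \<and> n i \<le> j})"
    by (auto intro: finite_subset[of _ "n ` {1..L}"])
  then show ?thesis
    unfolding fb_h_def by (subst Max_le_iff) auto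
qed

lemma path_prob_append:
  assumes "length p = a"
  shows "path_prob W L n f u w (a + b) (p @ q) = path_prob W L n f u w a p *
     (\<Prod>i<b. W (f (Suc (a + i)) u w (take (fb_h L n (a + i)) (p @ q))) ((p @ q) ! (a + i)))"
proof -
  have "W (f (Suc j) u w (take (fb_h L n j) (p @ q))) ((p @ q) ! j)
      = W (f (Suc j) u w (take (fb_h L n j) p)) (p ! j)" if "j < a" for j
  proof -
    have "fb_h L n j - length p = 0"
      using that fb_h_le[of L n j] assms by simp
    then show ?thesis
      using that assms by (simp add: nth_append)
  qed
  then show ?thesis
    unfolding path_prob_def prod_lessThan_add by (auto intro!: prod.cong)
qed

lemma sum_path_prob_take:
  fixes W :: "'x \<Rightarrow> 'y::finite \<Rightarrow> real"
  assumes W_sum: "\<And>x. (\<Sum>y\<in>UNIV. W x y) = 1"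
  shows "(\<Sum>ys\<in>seqs (m + r). path_prob W L n f u w (m + r) ys * G (take m ys))
       = (\<Sum>p\<in>seqs m. path_prob W L n f u w m p * G p)"
proof (induction r)
  case 0
  show ?case by (intro sum.cong refl) auto
next
  case (Suc r)
  have step: "path_prob W L n f u w (Suc (m + r)) (p @ [y]) =
      path_prob W L n f u w (m + r) p * W (f (Suc (m + r)) u w (take (fb_h L n (m + r)) p)) y"
    if "length p = m + r" for p and y :: 'y
    using path_prob_append[OF that, of W L n f u w 1 "[y]"] that fb_h_le[of L n "m + r"]
    by (simp add: nth_append)
  have "(\<Sum>ys\<in>seqs (m + Suc r). path_prob W L n f u w (m + Suc r) ys * G (take m ys))
      = (\<Sum>p\<in>seqs (m + r). \<Sum>y\<in>UNIV. path_prob W L n f u w (m + r) p * G (take m p) *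
           W (f (Suc (m + r)) u w (take (fb_h L n (m + r)) p)) y)"
    by (simp add: sum_seqs_Suc step mult_ac)
  also have "\<dots> = (\<Sum>p\<in>seqs (m + r). path_prob W L n f u w (m + r) p * G (take m p))"
    by (simp add: sum_distrib_left[symmetric] W_sum)
  finally show ?case
    using Suc.IH by simp
qed

section \<open>The transmission scheme\<close>

locale bursty_scheme =
  fixes W :: "'x::finite \<Rightarrow> 'y::finite \<Rightarrow> real"
    and PX :: "'x \<Rightarrow> real"
    and xA xR :: 'x
    and L M :: nat
    and n :: "nat \<Rightarrow> nat"
  assumes L: "odd L" "L \<ge> 3"
    and W_nonneg: "\<And>x y. 0 \<le> W x y"
    and W_sum: "\<And>x. (\<Sum>y\<in>UNIV. W x y) = 1"
    and PX_nonneg: "\<And>x. 0 \<le> PX x"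
    and PX_sum: "(\<Sum>x\<in>UNIV. PX x) = 1"
    and M: "M \<ge> 1"
    and n_pos: "n 1 \<ge> 1"
    and n_mono: "\<And>i. 1 \<le> i \<Longrightarrow> i < L \<Longrightarrow> n i < n (Suc i)"
begin

text \<open>The odd
  segments \<open>2 j - 1\<close> (\<open>j = 1, \<dots>, k + 1\<close>) carry the next chunk of the codeword, the even
  segments \<open>2 j\<close> (\<open>j = 1, \<dots>, k\<close>) repeat a control symbol; \<open>data_len j\<close> (the statement's \<open>s j\<close>)
  is the number of codeword symbols sent in the first \<open>j\<close> odd segments.\<close>

definition k :: nat where
  "k = (L - 1) div 2"

definition nx :: "nat \<Rightarrow> nat" where
  "nx = (\<lambda>i. if i = 0 then 0 else if i \<le> L then n i else n L)"

definition seg_len :: "nat \<Rightarrow> nat" where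
  "seg_len t = nx t - nx (t - 1)"

definition data_len :: "nat \<Rightarrow> nat" where
  "data_len j = (\<Sum>i=1..j. nx (2*i - 1) - nx (2*i - 2))"

definition code_len :: nat where
  "code_len = data_len (k + 1)"

definition segment :: "nat \<Rightarrow> 'y list \<Rightarrow> 'y list" where
  "segment t ys = take (seg_len t) (drop (nx (t - 1)) ys)"

definition data_outputs :: "nat \<Rightarrow> 'y list \<Rightarrow> 'y list" where
  "data_outputs j ys = concat (map (\<lambda>i. segment (2*i - 1) ys) [1..<Suc j])"

definition segment_of :: "nat \<Rightarrow> nat" where
  "segment_of j = (LEAST t. j < nx t)"

lemma L_eq: "L = 2*k + 1" and k_pos: "k \<ge> 1"
  using L unfolding k_def by (auto elim!: oddE)

lemma nx_0 [simp]: "nx 0 = 0"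
  by (simp add: nx_def)

lemma nx_L: "nx L = n L"
  using L_eq by (simp add: nx_def)

lemma nx_less: "i < i' \<Longrightarrow> i' \<le> L \<Longrightarrow> nx i < nx i'"
proof (induction i' rule: less_induct)
  case (less i')
  then obtain j where j: "i' = Suc j"
    by (cases i') auto
  have "nx j < nx (Suc j)"
    using n_pos n_mono[of j] less.prems j by (cases "j = 0") (auto simp: nx_def)
  moreover have "i = j \<or> nx i < nx j"
    using less.IH[of j] less.prems j less_Suc_eq by auto
  ultimately show ?case
    using j by auto
qed

lemma nx_le_nx_L: "nx i \<le> nx L"
  using nx_less[of i L] L_eq by (cases "i < L") (auto simp: nx_def)

lemma nx_mono: "i \<le> i' \<Longrightarrow> nx i \<le> nx i'"
  using nx_less[of i i'] nx_le_nx_L[of i] L_eq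
  by (cases "i = i'"; cases "i' \<le> L") (auto simp: nx_def)

lemma nx_eq_add_seg_len: "nx t = nx (t - 1) + seg_len t"
  using nx_mono[of "t - 1" t] by (simp add: seg_len_def)

lemma fb_h_eq_segment_start:
  assumes t: "1 \<le> t" "t \<le> L" and j: "nx (t - 1) \<le> j" "j < nx t"
  shows "fb_h L n j = nx (t - 1)"
proof -
  let ?X = "{0} \<union> {n i | i. 1 \<le> i \<and> i \<le> L \<and> n i \<le> j}"
  have "finite ?X"
    by (auto intro: finite_subset[of _ "n ` {1..L}"])
  moreover have "nx (t - 1) \<in> ?X"
    using t j by (cases "t = 1") (auto simp: nx_def)
  moreover have "x \<le> nx (t - 1)" if "x \<in> ?X" for x
  proof -
    from that consider "x = 0" | i where "x = n i" "1 \<le> i" "i \<le> L" "n i \<le> j"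
      by auto
    then show ?thesis
    proof cases
      case 2
      then have "nx i = n i"
        by (simp add: nx_def)
      with 2 j have "\<not> t \<le> i"
        using nx_mono[of t i] by auto
      then show ?thesis
        using nx_mono[of i "t - 1"] 2 \<open>nx i = n i\<close> by simp
    qed simp
  qed
  ultimately show ?thesis
    unfolding fb_h_def by (intro Max_eqI) auto
qed

lemma segment_of_eq:
  assumes "t \<le> L" and "nx (t - 1) \<le> j" "j < nx t"
  shows "segment_of j = t"
  unfolding segment_of_def
proof (rule Least_equality)
  fix t' assume "j < nx t'"
  show "t \<le> t'"
  proof (rule ccontr)
    assume "\<not> t \<le> t'"
    then have "nx t' \<le> nx (t - 1)"
      by (intro nx_mono) simp
    with \<open>j < nx t'\<close> assms show False
      by simp
  qed
qed fact

lemma segment_append_left: "nx t \<le> length p \<Longrightarrow> segment t (p @ q) = segment t p"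
  using nx_eq_add_seg_len[of t] unfolding segment_def by simp

lemma segment_append_right: "length p = nx (t - 1) \<Longrightarrow> length q = seg_len t \<Longrightarrow> segment t (p @ q) = q"
  unfolding segment_def by simp

lemma segment_take: "nx t \<le> m \<Longrightarrow> segment t (take m ys) = segment t ys"
  using nx_eq_add_seg_len[of t] unfolding segment_def by (simp add: take_drop min_def)

lemma length_segment: "nx t \<le> length p \<Longrightarrow> length (segment t p) = seg_len t"
  using nx_eq_add_seg_len[of t] unfolding segment_def by simp

lemma data_len_Suc: "data_len (Suc j) = data_len j + seg_len (2*j + 1)"
  unfolding data_len_def seg_len_def by simp

lemma data_len_le_code_len: "j \<le> k + 1 \<Longrightarrow> data_len j \<le> code_len"
  unfolding code_len_def by (induction rule: dec_induct) (auto simp: data_len_Suc)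

lemma data_outputs_cong:
  assumes "\<And>i. 1 \<le> i \<Longrightarrow> i \<le> j \<Longrightarrow> segment (2*i - 1) ys = segment (2*i - 1) ys'"
  shows "data_outputs j ys = data_outputs j ys'"
  unfolding data_outputs_def using assms by (auto intro!: arg_cong[where f = concat])

lemma data_outputs_take:
  assumes "nx (2*j - 1) \<le> m"
  shows "data_outputs j (take m ys) = data_outputs j ys"
proof (rule data_outputs_cong)
  fix i assume "1 \<le> i" "i \<le> j"
  then have "nx (2*i - 1) \<le> nx (2*j - 1)"
    by (intro nx_mono diff_le_mono) simp
  with assms have "nx (2*i - 1) \<le> m"
    by simp
  then show "segment (2*i - 1) (take m ys) = segment (2*i - 1) ys"
    by (rule segment_take)
qed

lemma data_outputs_append:
  assumes "nx (2*j - 1) \<le> length p"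
  shows "data_outputs j (p @ z) = data_outputs j p"
proof (rule data_outputs_cong)
  fix i assume "1 \<le> i" "i \<le> j"
  then have "nx (2*i - 1) \<le> nx (2*j - 1)"
    by (intro nx_mono diff_le_mono) simp
  with assms have "nx (2*i - 1) \<le> length p"
    by simp
  then show "segment (2*i - 1) (p @ z) = segment (2*i - 1) p"
    by (rule segment_append_left)
qed

lemma data_outputs_Suc_append:
  assumes "length p = nx (2*j)" "length d = seg_len (2*j + 1)"
  shows "data_outputs (Suc j) (p @ d) = data_outputs j p @ d"
proof -
  have "data_outputs j (p @ d) = data_outputs j p"
    using assms nx_mono[of "2*j - 1" "2*j"] by (intro data_outputs_append) auto
  moreover have "segment (2*Suc j - 1) (p @ d) = d"
    using assms by (intro segment_append_right) auto
  ultimately show ?thesis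
    by (simp add: data_outputs_def)
qed

definition data_dens :: "nat \<Rightarrow> 'x list \<Rightarrow> 'y list \<Rightarrow> ereal" where
  "data_dens j c x = info_dens W PX (data_len j) (take (data_len j) c) x"

definition ml_decode :: "nat \<Rightarrow> (nat \<Rightarrow> 'x list) \<Rightarrow> 'y list \<Rightarrow> nat" where
  "ml_decode j C x = (SOME v. v \<in> {1..M} \<and> (\<forall>v'\<in>{1..M}. data_dens j (C v') x \<le> data_dens j (C v) x))"

lemma ml_decode: "ml_decode j C x \<in> {1..M}"
  and ml_decode_max: "v \<in> {1..M} \<Longrightarrow> data_dens j (C v) x \<le> data_dens j (C (ml_decode j C x)) x"
proof -
  let ?I = "(\<lambda>v. data_dens j (C v) x) ` {1..M}"
  have "Max ?I \<in> ?I"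
    using M by (intro Max_in) auto
  then obtain v0 where "v0 \<in> {1..M}" "Max ?I = data_dens j (C v0) x"
    by auto
  then have "\<exists>v. v \<in> {1..M} \<and> (\<forall>v'\<in>{1..M}. data_dens j (C v') x \<le> data_dens j (C v) x)"
    by (metis (no_types, lifting) Max_ge finite_atLeastAtMost finite_imageI image_eqI)
  from someI_ex[OF this] show "ml_decode j C x \<in> {1..M}"
    and "v \<in> {1..M} \<Longrightarrow> data_dens j (C v) x \<le> data_dens j (C (ml_decode j C x)) x"
    unfolding ml_decode_def by blast+
qed

definition control_symbol :: "nat \<Rightarrow> (nat \<Rightarrow> 'x list) \<Rightarrow> nat \<Rightarrow> 'y list \<Rightarrow> 'x" where
  "control_symbol j C w p = (if ml_decode j C (data_outputs j p) = w then xA else xR)"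

text \<open>The input at time \<open>Suc j\<close>, i.e. channel use \<open>j\<close> counted from \<open>0\<close>. In
  an odd segment \<open>2 i - 1\<close> the encoder sends the codeword symbols \<open>data_len (i - 1) + 0, 1, \<dots>\<close>; in
  an even segment \<open>2 i\<close> it recomputes the receiver's decision of stage \<open>i\<close> from the fed-back
  outputs \<open>p\<close> and signals whether it is right.\<close>

definition encoder :: "nat \<Rightarrow> (nat \<Rightarrow> 'x list) \<Rightarrow> nat \<Rightarrow> 'y list \<Rightarrow> 'x" where
  "encoder tm C w p = (case tm of 0 \<Rightarrow> xA | Suc j \<Rightarrow>
     (let t = segment_of j in
      if odd t then C w ! (data_len ((t + 1) div 2 - 1) + (j - nx (t - 1)))
      else control_symbol (t div 2) C w p))"

abbreviation out_prob :: "(nat \<Rightarrow> 'x list) \<Rightarrow> nat \<Rightarrow> nat \<Rightarrow> 'y list \<Rightarrow> real" where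
  "out_prob \<equiv> path_prob W L n encoder"

definition seg_kernel :: "nat \<Rightarrow> (nat \<Rightarrow> 'x list) \<Rightarrow> nat \<Rightarrow> 'y list \<Rightarrow> 'y list \<Rightarrow> real" where
  "seg_kernel t C w p q = (\<Prod>i<seg_len t. W (encoder (Suc (nx (t - 1) + i)) C w p) (q ! i))"

lemma sum_out_prob_segment:
  assumes t: "1 \<le> t" "t \<le> L"
  shows "(\<Sum>p\<in>seqs (nx t). out_prob C w (nx t) p * G p) =
    (\<Sum>p\<in>seqs (nx (t - 1)). out_prob C w (nx (t - 1)) p *
       (\<Sum>q\<in>seqs (seg_len t). seg_kernel t C w p q * G (p @ q)))"
proof -
  have "out_prob C w (nx (t - 1) + seg_len t) (p @ q) = out_prob C w (nx (t - 1)) p * seg_kernel t C w p q"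
    if "length p = nx (t - 1)" for p q
  proof -
    have "fb_h L n (nx (t - 1) + i) = nx (t - 1)" if "i < seg_len t" for i
      using that t nx_eq_add_seg_len[of t] by (intro fb_h_eq_segment_start) auto
    then show ?thesis
      using that path_prob_append[of p "nx (t - 1)" W L n encoder C w "seg_len t" q]
      unfolding seg_kernel_def by (auto simp: nth_append intro!: prod.cong)
  qed
  then have "(\<Sum>ys\<in>seqs (nx (t - 1) + seg_len t). out_prob C w (nx (t - 1) + seg_len t) ys * G ys) =
    (\<Sum>p\<in>seqs (nx (t - 1)). out_prob C w (nx (t - 1)) p *
       (\<Sum>q\<in>seqs (seg_len t). seg_kernel t C w p q * G (p @ q)))"
    unfolding sum_seqs_append sum_distrib_left by (intro sum.cong refl) (simp add: mult_ac)
  then show ?thesis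
    by (simp only: nx_eq_add_seg_len[of t, symmetric])
qed

definition codeword_chunk :: "nat \<Rightarrow> 'x list \<Rightarrow> 'x list" where
  "codeword_chunk i c = take (seg_len (2*i - 1)) (drop (data_len (i - 1)) c)"

lemma take_data_len_Suc:
  assumes "length c = code_len" "j \<le> k"
  shows "take (data_len (Suc j)) c = take (data_len j) c @ codeword_chunk (Suc j) c"
  using assms unfolding codeword_chunk_def data_len_Suc by (simp add: take_add)

lemma length_codeword_chunk:
  assumes "length c = code_len" "j \<le> k"
  shows "length (codeword_chunk (Suc j) c) = seg_len (2*j + 1)"
  using assms data_len_le_code_len[of "Suc j"] unfolding codeword_chunk_def data_len_Suc by simp

lemma seg_kernel_data:
  assumes "j \<le> k" and c: "length (C w) = code_len" and "length q = seg_len (2*j + 1)"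
  shows "seg_kernel (2*j + 1) C w p q = chan_n W (codeword_chunk (Suc j) (C w)) q"
proof -
  have "encoder (Suc (nx (2*j) + i)) C w p = codeword_chunk (Suc j) (C w) ! i"
    if "i < seg_len (2*j + 1)" for i
  proof -
    have "segment_of (nx (2*j) + i) = 2*j + 1"
      using that assms L_eq nx_eq_add_seg_len[of "2*j + 1"] by (intro segment_of_eq) auto
    moreover have "data_len j + seg_len (2*j + 1) \<le> code_len"
      using data_len_le_code_len[of "Suc j"] assms by (simp add: data_len_Suc)
    ultimately show ?thesis
      using that c unfolding encoder_def codeword_chunk_def by (simp add: Let_def)
  qed
  then show ?thesis
    using assms length_codeword_chunk[OF c]
    unfolding seg_kernel_def by (simp add: chan_n_conv_prod)
qed

lemma seg_kernel_control:
  assumes "1 \<le> j" "j \<le> k" and "length q = seg_len (2*j)"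
  shows "seg_kernel (2*j) C w p q = chan_pow W (control_symbol j C w p) q"
proof -
  have "encoder (Suc (nx (2*j - 1) + i)) C w p = control_symbol j C w p" if "i < seg_len (2*j)" for i
  proof -
    have "segment_of (nx (2*j - 1) + i) = 2*j"
      using that assms L_eq nx_eq_add_seg_len[of "2*j"] by (intro segment_of_eq) auto
    then show ?thesis
      unfolding encoder_def by (simp add: Let_def)
  qed
  then show ?thesis
    using assms unfolding seg_kernel_def chan_pow_def by (simp add: prod_list_map_conv_prod)
qed

lemma sum_out_prob_data_segment:
  assumes "j \<le> k" and "length (C w) = code_len"
  shows "(\<Sum>p\<in>seqs (nx (2*j + 1)). out_prob C w (nx (2*j + 1)) p * G p) =
    (\<Sum>p\<in>seqs (nx (2*j)). out_prob C w (nx (2*j)) p *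
       (\<Sum>d\<in>seqs (seg_len (2*j + 1)). chan_n W (codeword_chunk (Suc j) (C w)) d * G (p @ d)))"
proof -
  have "seg_kernel (2*j + 1) C w p d = chan_n W (codeword_chunk (Suc j) (C w)) d"
    if "d \<in> seqs (seg_len (2*j + 1))" for p d
    using that assms by (intro seg_kernel_data) auto
  then show ?thesis
    using sum_out_prob_segment[of "2*j + 1" C w G] assms L_eq
    by (simp del: mem_seqs_iff cong: sum.cong_simp)
qed

lemma sum_out_prob_control_segment:
  assumes "1 \<le> j" "j \<le> k"
  shows "(\<Sum>p\<in>seqs (nx (2*j)). out_prob C w (nx (2*j)) p * G p) =
    (\<Sum>p\<in>seqs (nx (2*j - 1)). out_prob C w (nx (2*j - 1)) p *
       (\<Sum>z\<in>seqs (seg_len (2*j)). chan_pow W (control_symbol j C w p) z * G (p @ z)))"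
proof -
  have "seg_kernel (2*j) C w p z = chan_pow W (control_symbol j C w p) z"
    if "z \<in> seqs (seg_len (2*j))" for p z
    using that assms by (intro seg_kernel_control) auto
  then show ?thesis
    using sum_out_prob_segment[of "2*j" C w G] assms L_eq
    by (simp del: mem_seqs_iff cong: sum.cong_simp)
qed

lemma sum_out_prob_total: "(\<Sum>ys\<in>seqs (nx L). out_prob C w (nx L) ys) = 1"
  using sum_path_prob_take[OF W_sum, where m = 0 and r = "nx L" and G = "\<lambda>_. 1"]
  by (simp add: seqs_0 path_prob_def)

lemma sum_out_prob_take:
  assumes "m \<le> nx L"
  shows "(\<Sum>ys\<in>seqs (nx L). out_prob C w (nx L) ys * G (take m ys)) =
    (\<Sum>p\<in>seqs m. out_prob C w m p * G p)"
  using sum_path_prob_take[OF W_sum, where m = m and r = "nx L - m" and f = encoder] assms by simp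

lemma sum_data_outputs_Suc:
  assumes "length c = code_len" "j \<le> k"
  shows "(\<Sum>x\<in>seqs (data_len j). chan_n W (take (data_len j) c) x *
            (\<Sum>d\<in>seqs (seg_len (2*j + 1)). chan_n W (codeword_chunk (Suc j) c) d * H (x @ d)))
       = (\<Sum>x\<in>seqs (data_len (Suc j)). chan_n W (take (data_len (Suc j)) c) x * H x)"
proof -
  have len: "length (take (data_len j) c) = data_len j"
    using assms data_len_le_code_len[of j] by simp
  have "(\<Sum>x\<in>seqs (data_len (Suc j)). chan_n W (take (data_len (Suc j)) c) x * H x) =
      (\<Sum>x\<in>seqs (data_len j + seg_len (2*j + 1)).
         chan_n W (take (data_len j) c @ codeword_chunk (Suc j) c) x * H x)"
    unfolding take_data_len_Suc[OF assms] by (simp only: data_len_Suc)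
  also have "\<dots> = (\<Sum>x\<in>seqs (data_len j). chan_n W (take (data_len j) c) x *
            (\<Sum>d\<in>seqs (seg_len (2*j + 1)). chan_n W (codeword_chunk (Suc j) c) d * H (x @ d)))"
    unfolding sum_seqs_append using len by (simp add: chan_n_append sum_distrib_left mult_ac)
  finally show ?thesis ..
qed

lemma segments_append_control:
  assumes "length p = nx (2*j - 1)" "length z = seg_len (2*j)"
  shows "l < j \<Longrightarrow> segment (2*l) (p @ z @ q) = segment (2*l) p"
    and "segment (2*j) (p @ z @ q) = z"
    and "data_outputs j (p @ z @ q) = data_outputs j p"
proof -
  show "segment (2*l) (p @ z @ q) = segment (2*l) p" if "l < j"
    using that assms nx_mono[of "2*l" "2*j - 1"] by (intro segment_append_left) auto
  have "length (p @ z) = nx (2*j)"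
    using assms nx_eq_add_seg_len[of "2*j"] by simp
  then show "segment (2*j) (p @ z @ q) = z"
    using segment_append_left[of "2*j" "p @ z" q] segment_append_right[of p "2*j" z] assms by simp
  show "data_outputs j (p @ z @ q) = data_outputs j p"
    using assms by (intro data_outputs_append) simp
qed

lemma sum_out_prob_first_stage:
  assumes c: "length (C w) = code_len"
  shows "(\<Sum>p\<in>seqs (nx 1). out_prob C w (nx 1) p * H (data_outputs 1 p)) =
    (\<Sum>x\<in>seqs (data_len 1). chan_n W (take (data_len 1) (C w)) x * H x)"
proof -
  have "data_outputs 1 d = d" if "length d = seg_len 1" for d
    using data_outputs_Suc_append[of "[]" 0 d] that by (simp add: data_outputs_def)
  then have "(\<Sum>p\<in>seqs (nx 1). out_prob C w (nx 1) p * H (data_outputs 1 p)) =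
      (\<Sum>x\<in>seqs (data_len 0). chan_n W (take (data_len 0) (C w)) x *
         (\<Sum>d\<in>seqs (seg_len 1). chan_n W (codeword_chunk 1 (C w)) d * H (x @ d)))"
    using sum_out_prob_data_segment[of 0 C w] c
    by (simp add: seqs_0 path_prob_def data_len_def chan_n_def cong: sum.cong_simp)
  also have "\<dots> = (\<Sum>x\<in>seqs (data_len 1). chan_n W (take (data_len 1) (C w)) x * H x)"
    using sum_data_outputs_Suc[OF c, of 0] by simp
  finally show ?thesis .
qed

lemma sum_out_prob_next_stage:
  assumes j: "1 \<le> j" "j \<le> k" and c: "length (C w) = code_len"
  shows "(\<Sum>p\<in>seqs (nx (2*j + 1)). out_prob C w (nx (2*j + 1)) p *
      ((\<Prod>l\<in>{1..<Suc j}. \<phi> l (segment (2*l) p)) * H (data_outputs (Suc j) p)))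
    = (\<Sum>p\<in>seqs (nx (2*j - 1)). out_prob C w (nx (2*j - 1)) p *
      ((\<Prod>l\<in>{1..<j}. \<phi> l (segment (2*l) p)) *
       (\<Sum>z\<in>seqs (seg_len (2*j)). chan_pow W (control_symbol j C w p) z * \<phi> j z) *
       (\<Sum>d\<in>seqs (seg_len (2*j + 1)). chan_n W (codeword_chunk (Suc j) (C w)) d *
          H (data_outputs j p @ d))))"
proof -
  define F where "F p = (\<Prod>l\<in>{1..<Suc j}. \<phi> l (segment (2*l) p)) * H (data_outputs (Suc j) p)" for p
  have factors: "F (p @ z @ d) = (\<Prod>l\<in>{1..<j}. \<phi> l (segment (2*l) p)) * \<phi> j z * H (data_outputs j p @ d)"
    if "length p = nx (2*j - 1)" "length z = seg_len (2*j)" "length d = seg_len (2*j + 1)" for p z d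
  proof -
    have "length (p @ z) = nx (2*j)"
      using that nx_eq_add_seg_len[of "2*j"] by simp
    then have "data_outputs (Suc j) (p @ z @ d) = data_outputs j p @ d"
      using data_outputs_Suc_append[of "p @ z" j d] segments_append_control(3)[OF that(1,2), of "[]"] that
      by simp
    moreover have "{1..<Suc j} = insert j {1..<j}"
      using j by auto
    ultimately show ?thesis
      using segments_append_control[OF that(1,2)] unfolding F_def by (simp add: mult_ac)
  qed
  have "(\<Sum>p\<in>seqs (nx (2*j + 1)). out_prob C w (nx (2*j + 1)) p * F p)
      = (\<Sum>p\<in>seqs (nx (2*j - 1)). out_prob C w (nx (2*j - 1)) p *
          (\<Sum>z\<in>seqs (seg_len (2*j)). chan_pow W (control_symbol j C w p) z *
            (\<Sum>d\<in>seqs (seg_len (2*j + 1)). chan_n W (codeword_chunk (Suc j) (C w)) d * F (p @ z @ d))))"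
    using sum_out_prob_data_segment[of j C w F, OF j(2) c] sum_out_prob_control_segment[OF j] by simp
  also have "\<dots> = (\<Sum>p\<in>seqs (nx (2*j - 1)). out_prob C w (nx (2*j - 1)) p *
      ((\<Prod>l\<in>{1..<j}. \<phi> l (segment (2*l) p)) *
       (\<Sum>z\<in>seqs (seg_len (2*j)). chan_pow W (control_symbol j C w p) z * \<phi> j z) *
       (\<Sum>d\<in>seqs (seg_len (2*j + 1)). chan_n W (codeword_chunk (Suc j) (C w)) d *
          H (data_outputs j p @ d))))"
    by (simp add: factors cong: sum.cong_simp) (simp add: sum_distrib_left sum_distrib_right mult_ac)
  finally show ?thesis
    unfolding F_def .
qed

text \<open>The outputs of the data segments up to stage \<open>j\<close> are distributed like the output of the
  DMC fed with the first \<open>data_len j\<close> codeword symbols, whatever the control phases do; each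
  control phase \<open>l\<close> only contributes the factor \<open>\<theta> l\<close> bounding its conditional expectation.\<close>

lemma sum_out_prob_stage_le:
  fixes \<phi> :: "nat \<Rightarrow> 'y list \<Rightarrow> real" and \<theta> :: "nat \<Rightarrow> real"
  assumes "1 \<le> j" "j \<le> k + 1" and c: "length (C w) = code_len"
    and \<phi>_nonneg: "\<And>l z. 0 \<le> \<phi> l z"
    and \<phi>_le: "\<And>l p. 1 \<le> l \<Longrightarrow> l < j \<Longrightarrow>
       (\<Sum>z\<in>seqs (seg_len (2*l)). chan_pow W (control_symbol l C w p) z * \<phi> l z) \<le> \<theta> l"
    and H_nonneg: "\<And>x. 0 \<le> H x"
  shows "(\<Sum>p\<in>seqs (nx (2*j - 1)). out_prob C w (nx (2*j - 1)) p *
            ((\<Prod>l\<in>{1..<j}. \<phi> l (segment (2*l) p)) * H (data_outputs j p)))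
         \<le> (\<Prod>l\<in>{1..<j}. \<theta> l) * (\<Sum>x\<in>seqs (data_len j). chan_n W (take (data_len j) (C w)) x * H x)"
  using assms(1,2) \<phi>_le H_nonneg
proof (induction j arbitrary: H rule: nat_induct_at_least)
  case base
  then show ?case
    using sum_out_prob_first_stage[of C w, OF c] by simp
next
  case (Suc j)
  define \<Phi> where "\<Phi> p = (\<Prod>l\<in>{1..<j}. \<phi> l (segment (2*l) p))" for p
  define H' where "H' x = (\<Sum>d\<in>seqs (seg_len (2*j + 1)). chan_n W (codeword_chunk (Suc j) (C w)) d * H (x @ d))" for x
  have j: "1 \<le> j" "j \<le> k"
    using Suc by auto
  have \<theta>_j: "(\<Sum>z\<in>seqs (seg_len (2*j)). chan_pow W (control_symbol j C w p) z * \<phi> j z) \<le> \<theta> j" for p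
    using Suc.prems(2)[of j p] j by simp
  then have "0 \<le> \<theta> j"
    by (rule order_trans[rotated]) (intro sum_nonneg mult_nonneg_nonneg chan_pow_nonneg W_nonneg \<phi>_nonneg)
  have H'_nonneg: "0 \<le> H' x" for x
    unfolding H'_def by (intro sum_nonneg mult_nonneg_nonneg chan_n_nonneg W_nonneg Suc.prems)
  have \<Phi>_nonneg: "0 \<le> \<Phi> p" for p
    unfolding \<Phi>_def by (intro prod_nonneg \<phi>_nonneg)
  have "(\<Sum>p\<in>seqs (nx (2*Suc j - 1)). out_prob C w (nx (2*Suc j - 1)) p *
          ((\<Prod>l\<in>{1..<Suc j}. \<phi> l (segment (2*l) p)) * H (data_outputs (Suc j) p)))
      = (\<Sum>p\<in>seqs (nx (2*j - 1)). out_prob C w (nx (2*j - 1)) p *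
          (\<Phi> p * (\<Sum>z\<in>seqs (seg_len (2*j)). chan_pow W (control_symbol j C w p) z * \<phi> j z) *
           H' (data_outputs j p)))"
    using sum_out_prob_next_stage[where C = C and w = w and \<phi> = \<phi> and H = H, OF j c] unfolding \<Phi>_def H'_def by simp
  also have "\<dots> \<le> (\<Sum>p\<in>seqs (nx (2*j - 1)). out_prob C w (nx (2*j - 1)) p *
          (\<Phi> p * \<theta> j * H' (data_outputs j p)))"
    by (intro sum_mono mult_left_mono mult_right_mono \<theta>_j path_prob_nonneg W_nonneg \<Phi>_nonneg H'_nonneg)
  also have "\<dots> = \<theta> j * (\<Sum>p\<in>seqs (nx (2*j - 1)). out_prob C w (nx (2*j - 1)) p *
          (\<Phi> p * H' (data_outputs j p)))"
    by (simp add: sum_distrib_left mult_ac)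
  also have "\<dots> \<le> \<theta> j * ((\<Prod>l\<in>{1..<j}. \<theta> l) *
          (\<Sum>x\<in>seqs (data_len j). chan_n W (take (data_len j) (C w)) x * H' x))"
    using Suc.IH[of H'] Suc.prems H'_nonneg \<open>0 \<le> \<theta> j\<close> unfolding \<Phi>_def
    by (intro mult_left_mono) auto
  also have "\<dots> = (\<Prod>l\<in>{1..<Suc j}. \<theta> l) *
          (\<Sum>x\<in>seqs (data_len (Suc j)). chan_n W (take (data_len (Suc j)) (C w)) x * H x)"
    using sum_data_outputs_Suc[OF c j(2)] j unfolding H'_def
    by (simp add: atLeastLessThanSuc)
  finally show ?case .
qed

lemma sum_out_prob_test_stage_le:
  fixes \<phi> :: "nat \<Rightarrow> 'y list \<Rightarrow> real" and \<theta> :: "nat \<Rightarrow> real" and G :: "'y list \<Rightarrow> 'y list \<Rightarrow> real"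
  assumes j: "1 \<le> j" "j \<le> k" and c: "length (C w) = code_len"
    and \<phi>_nonneg: "\<And>l z. 0 \<le> \<phi> l z"
    and \<phi>_le: "\<And>l p. 1 \<le> l \<Longrightarrow> l < j \<Longrightarrow>
       (\<Sum>z\<in>seqs (seg_len (2*l)). chan_pow W (control_symbol l C w p) z * \<phi> l z) \<le> \<theta> l"
    and G_nonneg: "\<And>x z. 0 \<le> G x z"
  shows "(\<Sum>ys\<in>seqs (nx L). out_prob C w (nx L) ys *
            ((\<Prod>l\<in>{1..<j}. \<phi> l (segment (2*l) ys)) * G (data_outputs j ys) (segment (2*j) ys)))
         \<le> (\<Prod>l\<in>{1..<j}. \<theta> l) * (\<Sum>x\<in>seqs (data_len j). chan_n W (take (data_len j) (C w)) x *
            (\<Sum>z\<in>seqs (seg_len (2*j)).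
               chan_pow W (if ml_decode j C x = w then xA else xR) z * G x z))"
proof -
  define F where "F p = (\<Prod>l\<in>{1..<j}. \<phi> l (segment (2*l) p)) * G (data_outputs j p) (segment (2*j) p)" for p
  define H where "H x = (\<Sum>z\<in>seqs (seg_len (2*j)).
    chan_pow W (if ml_decode j C x = w then xA else xR) z * G x z)" for x
  have "F ys = F (take (nx (2*j)) ys)" for ys
  proof -
    have "segment (2*l) (take (nx (2*j)) ys) = segment (2*l) ys" if "l \<le> j" for l
      using that by (intro segment_take nx_mono) simp
    moreover have "data_outputs j (take (nx (2*j)) ys) = data_outputs j ys"
      by (intro data_outputs_take nx_mono) simp
    ultimately show ?thesis
      unfolding F_def by (auto intro!: prod.cong)
  qed
  then have "(\<Sum>ys\<in>seqs (nx L). out_prob C w (nx L) ys * F ys) =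
      (\<Sum>p\<in>seqs (nx (2*j)). out_prob C w (nx (2*j)) p * F p)"
    using sum_out_prob_take[of "nx (2*j)" C w F] nx_le_nx_L by simp
  also have "\<dots> = (\<Sum>p\<in>seqs (nx (2*j - 1)). out_prob C w (nx (2*j - 1)) p *
      ((\<Prod>l\<in>{1..<j}. \<phi> l (segment (2*l) p)) * H (data_outputs j p)))"
    unfolding sum_out_prob_control_segment[OF j]
    using segments_append_control[where q = "[]"]
    by (simp add: F_def H_def control_symbol_def sum_distrib_left mult_ac cong: sum.cong_simp)
  also have "\<dots> \<le> (\<Prod>l\<in>{1..<j}. \<theta> l) * (\<Sum>x\<in>seqs (data_len j). chan_n W (take (data_len j) (C w)) x * H x)"
    using j c \<phi>_nonneg \<phi>_le unfolding H_def
    by (intro sum_out_prob_stage_le) (auto intro!: sum_nonneg mult_nonneg_nonneg chan_pow_nonneg W_nonneg G_nonneg)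
  finally show ?thesis
    unfolding F_def H_def .
qed

section \<open>Random codebooks and the RCU bound\<close>

definition codebooks :: "(nat \<Rightarrow> 'x list) set" where
  "codebooks = PiE {1..M} (\<lambda>_. seqs code_len)"

definition codebook_prob :: "(nat \<Rightarrow> 'x list) \<Rightarrow> real" where
  "codebook_prob C = (\<Prod>v\<in>{1..M}. iid PX (C v))"

definition code_avg :: "((nat \<Rightarrow> 'x list) \<Rightarrow> nat \<Rightarrow> real) \<Rightarrow> real" where
  "code_avg F = (\<Sum>C\<in>codebooks. codebook_prob C * (1 / real M * (\<Sum>w\<in>{1..M}. F C w)))"

definition data_error :: "nat \<Rightarrow> (nat \<Rightarrow> 'x list) \<Rightarrow> nat \<Rightarrow> real" where
  "data_error j C w = (\<Sum>x\<in>seqs (data_len j).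
     chan_n W (take (data_len j) (C w)) x * (if ml_decode j C x \<noteq> w then 1 else 0))"

lemma finite_codebooks: "finite codebooks"
  unfolding codebooks_def by (intro finite_PiE) auto

lemma length_codeword: "C \<in> codebooks \<Longrightarrow> w \<in> {1..M} \<Longrightarrow> length (C w) = code_len"
  unfolding codebooks_def by (auto simp: PiE_iff)

lemma codebook_prob_nonneg: "0 \<le> codebook_prob C"
  unfolding codebook_prob_def by (intro prod_nonneg iid_nonneg PX_nonneg)

lemma sum_codebook_prob_prod:
  assumes "\<And>v. v \<in> {1..M} \<Longrightarrow> finite (A v)"
  shows "(\<Sum>C\<in>PiE {1..M} A. codebook_prob C * (\<Prod>v\<in>{1..M}. h v (C v))) =
    (\<Prod>v\<in>{1..M}. \<Sum>b\<in>A v. iid PX b * h v b)"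
  unfolding codebook_prob_def prod.distrib[symmetric] using assms
  by (intro prod_sum_PiE[symmetric]) auto

lemma sum_codebook_prob: "(\<Sum>C\<in>codebooks. codebook_prob C) = 1"
  using sum_codebook_prob_prod[of "\<lambda>_. seqs code_len" "\<lambda>_ _. 1"]
  by (simp add: codebooks_def sum_iid[OF PX_sum])

lemma code_avg_mono:
  "(\<And>C w. C \<in> codebooks \<Longrightarrow> w \<in> {1..M} \<Longrightarrow> F C w \<le> G C w) \<Longrightarrow> code_avg F \<le> code_avg G"
  unfolding code_avg_def by (intro sum_mono mult_left_mono codebook_prob_nonneg) auto

lemma code_avg_const: "code_avg (\<lambda>C w. a) = a"
  using M unfolding code_avg_def by (simp add: sum_distrib_right[symmetric] sum_codebook_prob)

lemma code_avg_add: "code_avg (\<lambda>C w. F C w + G C w) = code_avg F + code_avg G"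
  unfolding code_avg_def by (simp add: sum.distrib distrib_left)

lemma code_avg_cmult: "code_avg (\<lambda>C w. a * F C w) = a * code_avg F"
  unfolding code_avg_def by (simp add: sum_distrib_left mult_ac)

lemma code_avg_sum: "code_avg (\<lambda>C w. \<Sum>j\<in>J. F j C w) = (\<Sum>j\<in>J. code_avg (F j))"
proof -
  have "codebook_prob C * (1 / real M * (\<Sum>w\<in>{1..M}. \<Sum>j\<in>J. F j C w)) =
      (\<Sum>j\<in>J. codebook_prob C * (1 / real M * (\<Sum>w\<in>{1..M}. F j C w)))" for C
    by (simp only: sum.swap[of _ "{1..M}"] sum_distrib_left)
  then show ?thesis
    unfolding code_avg_def by (simp only: sum.swap[of _ codebooks])
qed

lemma codebooks_with_codeword:
  assumes "w \<in> {1..M}" "c \<in> seqs code_len"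
  shows "{C \<in> codebooks. C w = c} = PiE {1..M} (\<lambda>v. if v = w then {c} else seqs code_len)"
  using assms unfolding codebooks_def by (auto simp: PiE_iff extensional_def split: if_splits)

lemma sum_codebooks_with_codeword:
  fixes c :: "'x list" and f :: "'x list \<Rightarrow> real"
  assumes w: "w \<in> {1..M}"
  defines "A \<equiv> PiE {1..M} (\<lambda>v. if v = w then {c} else seqs code_len)"
  shows "(\<Sum>C\<in>A. codebook_prob C) = iid PX c"
    and "w' \<in> {1..M} - {w} \<Longrightarrow>
      (\<Sum>C\<in>A. codebook_prob C * f (C w')) = iid PX c * (\<Sum>b\<in>seqs code_len. iid PX b * f b)"
proof -
  have sum_A: "(\<Sum>C\<in>A. codebook_prob C * (\<Prod>v\<in>{1..M}. h v (C v))) =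
      (\<Prod>v\<in>{1..M}. if v = w then iid PX c * h v c else \<Sum>b\<in>seqs code_len. iid PX b * h v b)"
    for h :: "nat \<Rightarrow> 'x list \<Rightarrow> real"
    unfolding A_def by (subst sum_codebook_prob_prod) (auto intro!: prod.cong)
  have "(\<Sum>C\<in>A. codebook_prob C) = (\<Prod>v\<in>{1..M}. if v = w then iid PX c else 1)"
    using sum_A[of "\<lambda>_ _. 1"] by (simp add: sum_iid[OF PX_sum] cong: if_cong)
  then show "(\<Sum>C\<in>A. codebook_prob C) = iid PX c"
    using w by (simp add: prod.delta)
  assume w': "w' \<in> {1..M} - {w}"
  have "(\<Sum>C\<in>A. codebook_prob C * f (C w')) =
      (\<Sum>C\<in>A. codebook_prob C * (\<Prod>v\<in>{1..M}. if v = w' then f (C v) else 1))"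
    using w' by (simp add: prod.delta')
  also have "\<dots> = (\<Prod>v\<in>{1..M}. (if v = w then iid PX c else 1) *
      (if v = w' then (\<Sum>b\<in>seqs code_len. iid PX b * f b) else 1))"
    using sum_A[of "\<lambda>v b. if v = w' then f b else 1"] w'
    by (auto simp: sum_iid[OF PX_sum] cong: if_cong intro!: prod.cong)
  also have "\<dots> = iid PX c * (\<Sum>b\<in>seqs code_len. iid PX b * f b)"
    using w w' by (simp add: prod.distrib prod.delta')
  finally show "(\<Sum>C\<in>A. codebook_prob C * f (C w')) = iid PX c * (\<Sum>b\<in>seqs code_len. iid PX b * f b)" .
qed

definition dens_exceeds :: "nat \<Rightarrow> 'x list \<Rightarrow> 'x list \<Rightarrow> 'y list \<Rightarrow> real" where
  "dens_exceeds j b c x = (if data_dens j c x \<le> data_dens j b x then 1 else 0)"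

lemma dens_exceeds_nonneg: "0 \<le> dens_exceeds j b c x"
  by (simp add: dens_exceeds_def)

lemma ml_decode_error_le:
  assumes "w \<in> {1..M}"
  shows "(if ml_decode j C x \<noteq> w then 1 else 0) \<le> min 1 (\<Sum>w'\<in>{1..M} - {w}. dens_exceeds j (C w') (C w) x)"
proof (cases "ml_decode j C x = w")
  case False
  then have mem: "ml_decode j C x \<in> {1..M} - {w}"
    and "dens_exceeds j (C (ml_decode j C x)) (C w) x = 1"
    using ml_decode ml_decode_max[OF assms] by (auto simp: dens_exceeds_def)
  then have "1 \<le> (\<Sum>w'\<in>{1..M} - {w}. dens_exceeds j (C w') (C w) x)"
    using member_le_sum[OF mem, of "\<lambda>w'. dens_exceeds j (C w') (C w) x"]
    by (simp add: dens_exceeds_def)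
  with False show ?thesis
    by simp
qed (simp add: sum_nonneg dens_exceeds_nonneg)

text \<open>Averaging over the codewords of the other messages turns the union bound into the
  pairwise error probability of the RCU bound.\<close>

lemma sum_codebooks_with_min_le:
  fixes c :: "'x list"
  assumes w: "w \<in> {1..M}"
  defines "A \<equiv> PiE {1..M} (\<lambda>v. if v = w then {c} else seqs code_len)"
  shows "(\<Sum>C\<in>A. codebook_prob C * min 1 (\<Sum>w'\<in>{1..M} - {w}. dens_exceeds j (C w') c x))
    \<le> iid PX c * min 1 ((real M - 1) * (\<Sum>b\<in>seqs code_len. iid PX b * dens_exceeds j b c x))"
proof -
  let ?Q = "\<Sum>b\<in>seqs code_len. iid PX b * dens_exceeds j b c x"
  have sum_A: "(\<Sum>C\<in>A. codebook_prob C) = iid PX c"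
    unfolding A_def by (rule sum_codebooks_with_codeword(1)[OF w])
  have "(\<Sum>C\<in>A. codebook_prob C * (\<Sum>w'\<in>{1..M} - {w}. dens_exceeds j (C w') c x))
      = (\<Sum>w'\<in>{1..M} - {w}. \<Sum>C\<in>A. codebook_prob C * dens_exceeds j (C w') c x)"
    by (simp add: sum_distrib_left sum.swap[of _ A])
  also have "\<dots> = (\<Sum>w'\<in>{1..M} - {w}. iid PX c * ?Q)"
    unfolding A_def by (intro sum.cong refl sum_codebooks_with_codeword(2)[OF w])
  also have "\<dots> = (real M - 1) * (iid PX c * ?Q)"
    using w M by (simp add: of_nat_diff)
  finally have sum_pairs: "(\<Sum>C\<in>A. codebook_prob C * (\<Sum>w'\<in>{1..M} - {w}. dens_exceeds j (C w') c x))
      = (real M - 1) * (iid PX c * ?Q)" .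
  let ?S = "\<lambda>C. \<Sum>w'\<in>{1..M} - {w}. dens_exceeds j (C w') c x"
  have "(\<Sum>C\<in>A. codebook_prob C * min 1 (?S C)) \<le> iid PX c"
    unfolding sum_A[symmetric]
    by (intro sum_mono mult_right_le_one_le codebook_prob_nonneg) (auto intro!: sum_nonneg dens_exceeds_nonneg)
  moreover have "(\<Sum>C\<in>A. codebook_prob C * min 1 (?S C)) \<le> (real M - 1) * (iid PX c * ?Q)"
    unfolding sum_pairs[symmetric] by (intro sum_mono mult_left_mono codebook_prob_nonneg) auto
  ultimately have "(\<Sum>C\<in>A. codebook_prob C * min 1 (?S C))
      \<le> min (iid PX c) ((real M - 1) * (iid PX c * ?Q))"
    by simp
  also have "\<dots> = iid PX c * min 1 ((real M - 1) * ?Q)"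
    using iid_nonneg[OF PX_nonneg, where xs = c] by (simp add: min_mult_distrib_left mult_ac)
  finally show ?thesis .
qed

lemma rcu_eq_sum_codewords:
  assumes "j \<le> k + 1"
  shows "rcu W PX (data_len j) M = (\<Sum>c\<in>seqs code_len. iid PX c *
    (\<Sum>x\<in>seqs (data_len j). chan_n W (take (data_len j) c) x *
       min 1 ((real M - 1) * (\<Sum>b\<in>seqs code_len. iid PX b * dens_exceeds j b c x))))"
proof -
  note take_sum = sum_iid_take[OF PX_sum data_len_le_code_len[OF assms]]
  define F where "F c = (\<Sum>x\<in>seqs (data_len j). chan_n W c x * min 1 ((real M - 1) *
    (\<Sum>b\<in>seqs (data_len j). iid PX b *
       (if info_dens W PX (data_len j) b x \<ge> info_dens W PX (data_len j) c x then 1 else 0))))" for c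
  have "(\<Sum>b\<in>seqs code_len. iid PX b * dens_exceeds j b c x) =
      (\<Sum>b\<in>seqs (data_len j). iid PX b *
         (if info_dens W PX (data_len j) b x \<ge> info_dens W PX (data_len j) (take (data_len j) c) x
          then 1 else 0))" for c x
    unfolding dens_exceeds_def data_dens_def by (rule take_sum)
  then have "(\<Sum>c\<in>seqs code_len. iid PX c *
      (\<Sum>x\<in>seqs (data_len j). chan_n W (take (data_len j) c) x *
         min 1 ((real M - 1) * (\<Sum>b\<in>seqs code_len. iid PX b * dens_exceeds j b c x))))
      = (\<Sum>c\<in>seqs code_len. iid PX c * F (take (data_len j) c))"
    unfolding F_def by simp
  also have "\<dots> = (\<Sum>c\<in>seqs (data_len j). iid PX c * F c)"
    by (rule take_sum)
  also have "\<dots> = rcu W PX (data_len j) M"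
    unfolding rcu_def F_def by (simp add: sum_distrib_left mult_ac)
  finally show ?thesis ..
qed

lemma sum_codebooks_data_error_le_rcu:
  assumes j: "j \<le> k + 1" and w: "w \<in> {1..M}"
  shows "(\<Sum>C\<in>codebooks. codebook_prob C * data_error j C w) \<le> rcu W PX (data_len j) M"
proof -
  define A where "A c = PiE {1..M} (\<lambda>v. if v = w then {c} else seqs code_len)" for c :: "'x list"
  define S where "S C c x = min 1 (\<Sum>w'\<in>{1..M} - {w}. dens_exceeds j (C w') c x)" for C c x
  have "(\<Sum>C\<in>codebooks. codebook_prob C * data_error j C w) \<le> (\<Sum>C\<in>codebooks. codebook_prob C *
      (\<Sum>x\<in>seqs (data_len j). chan_n W (take (data_len j) (C w)) x * S C (C w) x))"
    unfolding data_error_def S_def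
    by (intro sum_mono mult_left_mono codebook_prob_nonneg chan_n_nonneg W_nonneg ml_decode_error_le[OF w])
  also have "\<dots> = (\<Sum>c\<in>seqs code_len. \<Sum>C\<in>{C \<in> codebooks. C w = c}. codebook_prob C *
      (\<Sum>x\<in>seqs (data_len j). chan_n W (take (data_len j) (C w)) x * S C (C w) x))"
    by (rule sum.group[symmetric]) (auto simp: finite_codebooks length_codeword[OF _ w])
  also have "\<dots> = (\<Sum>c\<in>seqs code_len. \<Sum>C\<in>A c. codebook_prob C *
      (\<Sum>x\<in>seqs (data_len j). chan_n W (take (data_len j) c) x * S C c x))"
  proof (intro sum.cong refl)
    fix c :: "'x list" and C
    assume "c \<in> seqs code_len"
    then show "{C \<in> codebooks. C w = c} = A c"
      unfolding A_def by (rule codebooks_with_codeword[OF w])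
    assume "C \<in> A c"
    then have "C w \<in> (if w = w then {c} else seqs code_len)"
      unfolding A_def using w by (rule PiE_mem)
    then show "codebook_prob C * (\<Sum>x\<in>seqs (data_len j). chan_n W (take (data_len j) (C w)) x * S C (C w) x)
      = codebook_prob C * (\<Sum>x\<in>seqs (data_len j). chan_n W (take (data_len j) c) x * S C c x)"
      by simp
  qed
  also have "\<dots> = (\<Sum>c\<in>seqs code_len. \<Sum>x\<in>seqs (data_len j).
      chan_n W (take (data_len j) c) x * (\<Sum>C\<in>A c. codebook_prob C * S C c x))"
    by (simp add: sum_distrib_left sum.swap[of _ "A _"] mult_ac)
  also have "\<dots> \<le> (\<Sum>c\<in>seqs code_len. \<Sum>x\<in>seqs (data_len j). chan_n W (take (data_len j) c) x *
      (iid PX c * min 1 ((real M - 1) * (\<Sum>b\<in>seqs code_len. iid PX b * dens_exceeds j b c x))))"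
    unfolding A_def S_def
    by (intro sum_mono mult_left_mono chan_n_nonneg W_nonneg sum_codebooks_with_min_le[OF w])
  also have "\<dots> = rcu W PX (data_len j) M"
    unfolding rcu_eq_sum_codewords[OF j] by (simp add: sum_distrib_left mult_ac)
  finally show ?thesis .
qed

lemma code_avg_data_error_le_rcu:
  assumes "j \<le> k + 1"
  shows "code_avg (data_error j) \<le> rcu W PX (data_len j) M"
proof -
  have "code_avg (data_error j) = 1 / real M * (\<Sum>w\<in>{1..M}. \<Sum>C\<in>codebooks. codebook_prob C * data_error j C w)"
    unfolding code_avg_def by (simp add: sum_distrib_left sum.swap[of _ codebooks] mult_ac)
  also have "\<dots> \<le> 1 / real M * (\<Sum>w\<in>{1..M}. rcu W PX (data_len j) M)"
    by (intro mult_left_mono sum_mono sum_codebooks_data_error_le_rcu[OF assms]) auto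
  also have "\<dots> = rcu W PX (data_len j) M"
    using M by simp
  finally show ?thesis .
qed

lemma exists_optimal_tests:
  assumes eps: "\<And>l. 1 \<le> l \<Longrightarrow> l \<le> k \<Longrightarrow> 0 \<le> eps l"
  shows "\<exists>T. (\<forall>l z. 0 \<le> T l z \<and> T l z \<le> 1) \<and> (\<forall>l\<in>{1..k}.
    (\<Sum>z\<in>seqs (seg_len (2*l)). chan_pow W xA z * (1 - T l z)) \<le> eps l \<and>
    (\<Sum>z\<in>seqs (seg_len (2*l)). chan_pow W xR z * T l z) =
      hyp_beta (seqs (seg_len (2*l))) (eps l) (chan_pow W xA) (chan_pow W xR))"
proof -
  have "\<exists>t. (\<forall>z. 0 \<le> t z \<and> t z \<le> 1) \<and> (l \<in> {1..k} \<longrightarrow>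
      (\<Sum>z\<in>seqs (seg_len (2*l)). chan_pow W xA z * (1 - t z)) \<le> eps l \<and>
      (\<Sum>z\<in>seqs (seg_len (2*l)). chan_pow W xR z * t z) =
        hyp_beta (seqs (seg_len (2*l))) (eps l) (chan_pow W xA) (chan_pow W xR))" for l
  proof (cases "l \<in> {1..k}")
    case True
    then show ?thesis
      using hyp_beta_attained[OF finite_seqs chan_pow_nonneg[OF W_nonneg] eps] by auto
  qed (auto intro: exI[of _ "\<lambda>_. 0"])
  then have "\<forall>l. \<exists>t. (\<forall>z. 0 \<le> t z \<and> t z \<le> 1) \<and> (l \<in> {1..k} \<longrightarrow>
      (\<Sum>z\<in>seqs (seg_len (2*l)). chan_pow W xA z * (1 - t z)) \<le> eps l \<and>
      (\<Sum>z\<in>seqs (seg_len (2*l)). chan_pow W xR z * t z) =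
        hyp_beta (seqs (seg_len (2*l))) (eps l) (chan_pow W xA) (chan_pow W xR))"
    by blast
  from choice[OF this] show ?thesis
    by blast
qed

end

section \<open>Randomized stopping\<close>

lemma sum_PiE_prod_marginal:
  fixes q g :: "'a \<Rightarrow> 'b::finite \<Rightarrow> real"
  assumes "finite D" "E \<subseteq> D" and q_sum: "\<And>d. d \<in> D - E \<Longrightarrow> (\<Sum>b\<in>UNIV. q d b) = 1"
  shows "(\<Sum>R\<in>PiE D (\<lambda>_. UNIV). (\<Prod>d\<in>D. q d (R d)) * (\<Prod>d\<in>E. g d (R d)))
    = (\<Prod>d\<in>E. \<Sum>b\<in>UNIV. q d b * g d b)"
proof -
  let ?g = "\<lambda>d b. if d \<in> E then g d b else 1"
  have "(\<Prod>d\<in>E. g d (R d)) = (\<Prod>d\<in>D. ?g d (R d))" for R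
    using assms(1,2) by (intro prod.mono_neutral_cong_left) auto
  then have "(\<Sum>R\<in>PiE D (\<lambda>_. UNIV). (\<Prod>d\<in>D. q d (R d)) * (\<Prod>d\<in>E. g d (R d)))
      = (\<Sum>R\<in>PiE D (\<lambda>_. UNIV). \<Prod>d\<in>D. q d (R d) * ?g d (R d))"
    by (simp add: prod.distrib)
  also have "\<dots> = (\<Prod>d\<in>D. \<Sum>b\<in>UNIV. q d b * ?g d b)"
    using assms(1) by (intro prod_sum_PiE[symmetric]) auto
  also have "\<dots> = (\<Prod>d\<in>E. \<Sum>b\<in>UNIV. q d b * g d b)"
    using assms q_sum by (intro prod.mono_neutral_cong_right) auto
  finally show ?thesis .
qed

lemma sum_swap_weighted:
  fixes p :: "'r \<Rightarrow> 'a::comm_semiring_1"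
  shows "(\<Sum>r\<in>A. p r * (\<Sum>w\<in>B. \<Sum>y\<in>D. q w y * F r w y)) =
    (\<Sum>w\<in>B. \<Sum>y\<in>D. q w y * (\<Sum>r\<in>A. p r * F r w y))"
proof -
  have "(\<Sum>r\<in>A. p r * (\<Sum>w\<in>B. \<Sum>y\<in>D. q w y * F r w y)) =
      (\<Sum>r\<in>A. \<Sum>w\<in>B. \<Sum>y\<in>D. q w y * (p r * F r w y))"
    by (simp add: sum_distrib_left mult_ac)
  also have "\<dots> = (\<Sum>w\<in>B. \<Sum>y\<in>D. \<Sum>r\<in>A. q w y * (p r * F r w y))"
    by (subst sum.swap) (simp only: sum.swap[of _ A])
  also have "\<dots> = (\<Sum>w\<in>B. \<Sum>y\<in>D. q w y * (\<Sum>r\<in>A. p r * F r w y))"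
    by (simp only: sum_distrib_left)
  finally show ?thesis .
qed

locale tested_scheme = bursty_scheme W PX xA xR L M n
  for W :: "'x::finite \<Rightarrow> 'y::finite \<Rightarrow> real"
    and PX :: "'x \<Rightarrow> real"
    and xA xR :: 'x
    and L M :: nat
    and n :: "nat \<Rightarrow> nat" +
  fixes eps :: "nat \<Rightarrow> real"
    and T :: "nat \<Rightarrow> 'y list \<Rightarrow> real"
  assumes T_range: "\<And>l z. 0 \<le> T l z \<and> T l z \<le> 1"
    and T_type_I: "\<And>l. 1 \<le> l \<Longrightarrow> l \<le> k \<Longrightarrow>
      (\<Sum>z\<in>seqs (seg_len (2*l)). chan_pow W xA z * (1 - T l z)) \<le> eps l"
begin

text \<open>\<open>T l z\<close> is the probability that the receiver's test at the end of the control segment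
  \<open>2 l\<close> accepts (and stops) after observing \<open>z\<close> there. The coins of all these tests are drawn in
  advance as part of the common randomness: a test outcome \<open>R\<close> records, for every stage \<open>l\<close> and
  every possible observation \<open>z\<close>, whether the test accepts. \<open>beta l\<close> is the type II error of
  \<open>T l\<close>, which is the statement's \<open>\<beta> l\<close> when \<open>T l\<close> is optimal, and \<open>cont_bound l\<close> is the
  statement's \<open>p l\<close>, a bound on the conditional probability that stage \<open>l\<close> does not stop.\<close>

definition beta :: "nat \<Rightarrow> real" where
  "beta l = (\<Sum>z\<in>seqs (seg_len (2*l)). chan_pow W xR z * T l z)"

definition cont_bound :: "nat \<Rightarrow> real" where
  "cont_bound l = (if l = 0 then 1 else max (eps l) (1 - beta l))"

definition test_points :: "(nat \<times> 'y list) set" where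
  "test_points = Sigma {1..k} (\<lambda>l. seqs (seg_len (2*l)))"

definition test_outcomes :: "(nat \<times> 'y list \<Rightarrow> bool) set" where
  "test_outcomes = PiE test_points (\<lambda>_. UNIV)"

definition accept_prob :: "nat \<times> 'y list \<Rightarrow> bool \<Rightarrow> real" where
  "accept_prob d b = (if b then T (fst d) (snd d) else 1 - T (fst d) (snd d))"

definition test_outcome_prob :: "(nat \<times> 'y list \<Rightarrow> bool) \<Rightarrow> real" where
  "test_outcome_prob R = (\<Prod>d\<in>test_points. accept_prob d (R d))"

definition stop_stage :: "(nat \<times> 'y list \<Rightarrow> bool) \<Rightarrow> 'y list \<Rightarrow> nat" where
  "stop_stage R ys = (if \<exists>l\<in>{1..k}. R (l, segment (2*l) ys)
     then LEAST l. l \<in> {1..k} \<and> R (l, segment (2*l) ys) else k + 1)"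

lemma eps_nonneg:
  assumes "1 \<le> l" "l \<le> k"
  shows "0 \<le> eps l"
proof -
  have "0 \<le> (\<Sum>z\<in>seqs (seg_len (2*l)). chan_pow W xA z * (1 - T l z))"
    using T_range by (intro sum_nonneg mult_nonneg_nonneg chan_pow_nonneg W_nonneg) auto
  with T_type_I[OF assms] show ?thesis
    by linarith
qed

lemma beta_range: "0 \<le> beta l" "beta l \<le> 1"
proof -
  show "0 \<le> beta l"
    unfolding beta_def using T_range by (intro sum_nonneg mult_nonneg_nonneg chan_pow_nonneg W_nonneg) auto
  have "beta l \<le> (\<Sum>z\<in>seqs (seg_len (2*l)). chan_pow W xR z)"
    unfolding beta_def using T_range by (intro sum_mono mult_right_le_one_le chan_pow_nonneg W_nonneg) auto
  then show "beta l \<le> 1"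
    using sum_chan_pow[of W, OF W_sum] by simp
qed

lemma sum_chan_pow_xR_reject: "(\<Sum>z\<in>seqs (seg_len (2*l)). chan_pow W xR z * (1 - T l z)) = 1 - beta l"
  unfolding beta_def using sum_chan_pow[of W, OF W_sum, where m = "seg_len (2*l)" and x = xR]
  by (simp add: algebra_simps sum_subtractf)

lemma cont_bound_nonneg: "l \<le> k \<Longrightarrow> 0 \<le> cont_bound l"
  unfolding cont_bound_def using eps_nonneg beta_range by (auto simp: max_def)

lemma prod_cont_bound_nonneg: "j \<le> k + 1 \<Longrightarrow> 0 \<le> (\<Prod>l\<in>{1..<j}. cont_bound l)"
  by (intro prod_nonneg cont_bound_nonneg) auto

lemma sum_control_reject_le:
  assumes "1 \<le> l" "l \<le> k"
  shows "(\<Sum>z\<in>seqs (seg_len (2*l)). chan_pow W (control_symbol l C w p) z * (1 - T l z)) \<le> cont_bound l"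
  using T_type_I[OF assms] sum_chan_pow_xR_reject[of l] assms
  unfolding control_symbol_def cont_bound_def by auto

lemma finite_test_points: "finite test_points"
  unfolding test_points_def by (intro finite_SigmaI) auto

lemma finite_test_outcomes: "finite test_outcomes"
  unfolding test_outcomes_def using finite_test_points by (intro finite_PiE) auto

lemma test_outcome_prob_nonneg: "0 \<le> test_outcome_prob R"
  unfolding test_outcome_prob_def accept_prob_def using T_range by (intro prod_nonneg) auto

lemma sum_test_outcome_prob_agree:
  assumes J: "J \<subseteq> {1..k}" and zs: "\<And>l. l \<in> J \<Longrightarrow> length (zs l) = seg_len (2*l)"
  shows "(\<Sum>R\<in>test_outcomes. test_outcome_prob R * (\<Prod>l\<in>J. if R (l, zs l) = v l then 1 else 0))
    = (\<Prod>l\<in>J. accept_prob (l, zs l) (v l))"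
proof -
  let ?e = "\<lambda>l. (l, zs l)"
  have inj: "inj_on ?e J"
    by (auto simp: inj_on_def)
  have "?e ` J \<subseteq> test_points"
    using J zs unfolding test_points_def by auto
  moreover have "(\<Sum>b\<in>UNIV. accept_prob d b) = 1" for d
    by (simp add: accept_prob_def UNIV_bool)
  ultimately have "(\<Sum>R\<in>test_outcomes. test_outcome_prob R *
        (\<Prod>d\<in>?e ` J. if R d = v (fst d) then 1 else 0))
      = (\<Prod>d\<in>?e ` J. \<Sum>b\<in>UNIV. accept_prob d b * (if b = v (fst d) then 1 else 0))"
    unfolding test_outcomes_def test_outcome_prob_def
    by (intro sum_PiE_prod_marginal finite_test_points) auto
  then show ?thesis
    by (simp add: prod.reindex[OF inj] if_distrib[of "\<lambda>t. _ * t"] cong: if_cong)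
qed

lemma sum_test_outcome_prob: "(\<Sum>R\<in>test_outcomes. test_outcome_prob R) = 1"
  using sum_test_outcome_prob_agree[of "{}"] by simp

lemma stop_stage:
  shows "stop_stage R ys \<in> {1..k + 1}"
    and "\<And>l. l \<in> {1..<stop_stage R ys} \<Longrightarrow> \<not> R (l, segment (2*l) ys)"
    and "stop_stage R ys \<le> k \<Longrightarrow> R (stop_stage R ys, segment (2 * stop_stage R ys) ys)"
proof -
  let ?P = "\<lambda>l. l \<in> {1..k} \<and> R (l, segment (2*l) ys)"
  have "stop_stage R ys \<in> {1..k + 1} \<and> (\<forall>l\<in>{1..<stop_stage R ys}. \<not> R (l, segment (2*l) ys)) \<and>
    (stop_stage R ys \<le> k \<longrightarrow> R (stop_stage R ys, segment (2 * stop_stage R ys) ys))"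
  proof (cases "\<exists>l. ?P l")
    case True
    define m where "m = (LEAST l. ?P l)"
    have m: "?P m"
      unfolding m_def using True by (rule LeastI_ex)
    have "\<not> ?P l" if "l < m" for l
      using not_less_Least[of l ?P] that unfolding m_def by blast
    moreover have "stop_stage R ys = m"
      using True unfolding stop_stage_def m_def by (simp add: Bex_def)
    ultimately show ?thesis
      using m by auto
  qed (auto simp: stop_stage_def)
  then show "stop_stage R ys \<in> {1..k + 1}"
    and "\<And>l. l \<in> {1..<stop_stage R ys} \<Longrightarrow> \<not> R (l, segment (2*l) ys)"
    and "stop_stage R ys \<le> k \<Longrightarrow> R (stop_stage R ys, segment (2 * stop_stage R ys) ys)"
    by auto
qed

lemma stop_stage_eq_iff:
  assumes "1 \<le> j" "j \<le> k"
  shows "stop_stage R ys = j \<longleftrightarrow> (\<forall>l\<in>{1..j}. R (l, segment (2*l) ys) = (l = j))"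
proof
  assume "stop_stage R ys = j"
  then show "\<forall>l\<in>{1..j}. R (l, segment (2*l) ys) = (l = j)"
    using stop_stage(2,3)[where R = R and ys = ys] assms by force
next
  assume R: "\<forall>l\<in>{1..j}. R (l, segment (2*l) ys) = (l = j)"
  then have "\<not> stop_stage R ys < j"
    using stop_stage(1,3)[where R = R and ys = ys] assms by fastforce
  moreover have "\<not> j < stop_stage R ys"
    using stop_stage(2)[where R = R and ys = ys and l = j] R assms by auto
  ultimately show "stop_stage R ys = j"
    by simp
qed

lemma less_stop_stage_iff:
  assumes "j \<le> k"
  shows "j < stop_stage R ys \<longleftrightarrow> (\<forall>l\<in>{1..j}. \<not> R (l, segment (2*l) ys))"
proof
  assume "j < stop_stage R ys"
  then show "\<forall>l\<in>{1..j}. \<not> R (l, segment (2*l) ys)"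
    using stop_stage(2)[where R = R and ys = ys] by auto
next
  assume "\<forall>l\<in>{1..j}. \<not> R (l, segment (2*l) ys)"
  then show "j < stop_stage R ys"
    using stop_stage(1,3)[where R = R and ys = ys] assms by (cases "stop_stage R ys \<le> k") auto
qed

definition stop_rule :: "nat \<Rightarrow> (nat \<Rightarrow> 'x list) \<times> (nat \<times> 'y list \<Rightarrow> bool) \<Rightarrow> 'y list \<Rightarrow> bool" where
  "stop_rule i u p = (even i \<and> snd u (i div 2, segment i p))"

definition decoder :: "nat \<Rightarrow> (nat \<Rightarrow> 'x list) \<times> (nat \<times> 'y list \<Rightarrow> bool) \<Rightarrow> 'y list \<Rightarrow> nat" where
  "decoder i u p = ml_decode ((i + 1) div 2) (fst u) (data_outputs ((i + 1) div 2) p)"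

abbreviation code_stop :: "('u \<Rightarrow> (nat \<Rightarrow> 'x list) \<times> (nat \<times> 'y list \<Rightarrow> bool)) \<Rightarrow> nat \<Rightarrow> 'u \<Rightarrow> 'y list \<Rightarrow> bool" where
  "code_stop h \<equiv> \<lambda>i u p. stop_rule i (h u) p"

abbreviation code_decoder :: "('u \<Rightarrow> (nat \<Rightarrow> 'x list) \<times> (nat \<times> 'y list \<Rightarrow> bool)) \<Rightarrow> nat \<Rightarrow> 'u \<Rightarrow> 'y list \<Rightarrow> nat" where
  "code_decoder h \<equiv> \<lambda>i u p. decoder i (h u) p"

definition stop_index :: "nat \<Rightarrow> nat" where
  "stop_index m = (if m \<le> k then 2*m else L)"

lemma stop_index:
  assumes "m \<in> {1..k + 1}"
  shows "1 \<le> stop_index m" "stop_index m \<le> L" "(stop_index m + 1) div 2 = m"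
    and "n (stop_index m) = nx (2*m)" "nx (2*m - 1) \<le> n (stop_index m)"
  using assms L_eq nx_mono[of "2*m - 1" "2*m"] by (auto simp: stop_index_def nx_def)

lemma stop_idx_stop_rule:
  assumes ys: "length ys = nx L" and u: "h u = (C, R)"
  shows "stop_idx L n (code_stop h) u ys = stop_index (stop_stage R ys)"
  unfolding stop_idx_def
proof (rule Least_equality)
  let ?m = "stop_stage R ys"
  have m: "?m \<in> {1..k + 1}"
    by (rule stop_stage)
  have "stop_rule (2 * ?m) (h u) (take (n (2 * ?m)) ys)" if "?m \<le> k"
    using stop_stage(3)[of R ys] stop_index(4)[OF m] that u
    by (simp add: stop_rule_def stop_index_def segment_take)
  then show "1 \<le> stop_index ?m \<and> (stop_index ?m = L \<or> stop_rule (stop_index ?m) (h u) (take (n (stop_index ?m)) ys))"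
    using stop_index(1)[OF m] by (auto simp: stop_index_def)
  fix i assume i: "1 \<le> i \<and> (i = L \<or> stop_rule i (h u) (take (n i) ys))"
  show "stop_index ?m \<le> i"
  proof (rule ccontr)
    assume less: "\<not> stop_index ?m \<le> i"
    then have "i < L" "stop_rule i (h u) (take (n i) ys)"
      using i stop_index(2)[OF m] by auto
    then obtain l where l: "i = 2*l" "R (l, segment (2*l) ys)"
      using i u by (auto simp: stop_rule_def segment_take nx_def elim!: evenE)
    moreover have "l \<in> {1..<?m}"
      using less l i \<open>i < L\<close> m L_eq by (auto simp: stop_index_def split: if_splits)
    ultimately show False
      using stop_stage(2) by blast
  qed
qed

lemma decoder_at_stop:
  assumes "m \<in> {1..k + 1}"
  shows "decoder (stop_index m) (C, R) (take (n (stop_index m)) ys) = ml_decode m C (data_outputs m ys)"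
  using stop_index[OF assms] by (simp add: decoder_def data_outputs_take)

lemma error_indicator_eq:
  assumes ys: "length ys = nx L" and u: "h u = (C, R)"
  shows "(let i = stop_idx L n (code_stop h) u ys in
            if decoder i (h u) (take (n i) ys) \<noteq> w then 1 else 0 :: real)
    = (\<Sum>j\<in>{1..k + 1}. (if stop_stage R ys = j then 1 else 0) *
         (if ml_decode j C (data_outputs j ys) \<noteq> w then 1 else 0))"
proof -
  define m where "m = stop_stage R ys"
  have m: "m \<in> {1..k + 1}"
    unfolding m_def by (rule stop_stage)
  have "(\<Sum>j\<in>{1..k + 1}. (if m = j then 1 else 0) * (if ml_decode j C (data_outputs j ys) \<noteq> w then 1 else 0))
      = (\<Sum>j\<in>{1..k + 1}. if m = j then (if ml_decode j C (data_outputs j ys) \<noteq> w then 1 else 0) else 0 :: real)"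
    by (intro sum.cong) auto
  also have "\<dots> = (if ml_decode m C (data_outputs m ys) \<noteq> w then 1 else 0)"
    using m by (simp add: sum.delta)
  finally show ?thesis
    unfolding Let_def stop_idx_stop_rule[where h = h and u = u and C = C and R = R, OF ys u] u
      m_def[symmetric] decoder_at_stop[OF m] by simp
qed

lemma nx_telescope:
  "1 \<le> m \<Longrightarrow> real (nx 2) + (\<Sum>j\<in>{1..<m}. real (nx (2*j + 2) - nx (2*j))) = real (nx (2*m))"
proof (induction m rule: nat_induct_at_least)
  case (Suc m)
  have "nx (2*m) \<le> nx (2*m + 2)"
    by (rule nx_mono) simp
  with Suc show ?case
    by (simp add: atLeastLessThanSuc of_nat_diff)
qed simp

lemma stop_time_eq:
  assumes ys: "length ys = nx L" and u: "h u = (C, R)"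
  shows "real (n (stop_idx L n (code_stop h) u ys)) =
    real (nx 2) + (\<Sum>j\<in>{1..k}. real (nx (2*j + 2) - nx (2*j)) * (if j < stop_stage R ys then 1 else 0))"
proof -
  define m where "m = stop_stage R ys"
  have m: "m \<in> {1..k + 1}"
    unfolding m_def by (rule stop_stage)
  have "{j \<in> {1..k}. j < m} = {1..<m}"
    using m by auto
  then have "(\<Sum>j\<in>{1..k}. real (nx (2*j + 2) - nx (2*j)) * (if j < m then 1 else 0))
      = (\<Sum>j\<in>{1..<m}. real (nx (2*j + 2) - nx (2*j)))"
    by (simp add: if_distrib[of "\<lambda>t. _ * t"] sum.inter_filter[symmetric] cong: if_cong)
  then show ?thesis
    using nx_telescope[of m] m stop_index(4)[OF m]
    unfolding stop_idx_stop_rule[where h = h and u = u and C = C and R = R, OF ys u] m_def[symmetric] by simp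
qed

lemma length_segment_control:
  "length ys = nx L \<Longrightarrow> l \<le> k \<Longrightarrow> length (segment (2*l) ys) = seg_len (2*l)"
  using L_eq nx_mono[of "2*l" L] by (intro length_segment) auto

lemma sum_test_outcome_prob_stop_stage_eq:
  assumes ys: "length ys = nx L" and j: "1 \<le> j" "j \<le> k"
  shows "(\<Sum>R\<in>test_outcomes. test_outcome_prob R * (if stop_stage R ys = j then 1 else 0)) =
    (\<Prod>l\<in>{1..<j}. 1 - T l (segment (2*l) ys)) * T j (segment (2*j) ys)"
proof -
  have "(if stop_stage R ys = j then 1 else 0) =
      (\<Prod>l\<in>{1..j}. if R (l, segment (2*l) ys) = (l = j) then 1 else 0 :: real)" for R
    unfolding stop_stage_eq_iff[OF j] by (simp add: prod_zero_iff)
  then have "(\<Sum>R\<in>test_outcomes. test_outcome_prob R * (if stop_stage R ys = j then 1 else 0)) =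
      (\<Prod>l\<in>{1..j}. accept_prob (l, segment (2*l) ys) (l = j))"
    using j by (simp only:) (intro sum_test_outcome_prob_agree length_segment_control[OF ys]; simp)
  also have "{1..j} = insert j {1..<j}"
    using j by auto
  also have "(\<Prod>l\<in>{1..<j}. accept_prob (l, segment (2*l) ys) (l = j)) =
      (\<Prod>l\<in>{1..<j}. 1 - T l (segment (2*l) ys))"
    by (intro prod.cong) (auto simp: accept_prob_def)
  then have "(\<Prod>l\<in>insert j {1..<j}. accept_prob (l, segment (2*l) ys) (l = j)) =
      (\<Prod>l\<in>{1..<j}. 1 - T l (segment (2*l) ys)) * T j (segment (2*j) ys)"
    by (simp add: accept_prob_def)
  finally show ?thesis .
qed

lemma sum_test_outcome_prob_less_stop_stage:
  assumes ys: "length ys = nx L" and j: "j \<le> k"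
  shows "(\<Sum>R\<in>test_outcomes. test_outcome_prob R * (if j < stop_stage R ys then 1 else 0)) =
    (\<Prod>l\<in>{1..j}. 1 - T l (segment (2*l) ys))"
proof -
  have "(if j < stop_stage R ys then 1 else 0) =
      (\<Prod>l\<in>{1..j}. if R (l, segment (2*l) ys) = False then 1 else 0 :: real)" for R
    unfolding less_stop_stage_iff[OF j] by (simp add: prod_zero_iff)
  then have "(\<Sum>R\<in>test_outcomes. test_outcome_prob R * (if j < stop_stage R ys then 1 else 0)) =
      (\<Prod>l\<in>{1..j}. accept_prob (l, segment (2*l) ys) False)"
    using j by (simp only:) (intro sum_test_outcome_prob_agree length_segment_control[OF ys]; simp)
  then show ?thesis
    by (simp add: accept_prob_def)
qed

definition avg_stop_time :: "'y list \<Rightarrow> real" where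
  "avg_stop_time ys = real (nx 2) + (\<Sum>j\<in>{1..k}. real (nx (2*j + 2) - nx (2*j)) *
     (\<Prod>l\<in>{1..j}. 1 - T l (segment (2*l) ys)))"

definition avg_error :: "(nat \<Rightarrow> 'x list) \<Rightarrow> nat \<Rightarrow> 'y list \<Rightarrow> real" where
  "avg_error C w ys =
     (\<Sum>j\<in>{1..k}. (\<Prod>l\<in>{1..<j}. 1 - T l (segment (2*l) ys)) * T j (segment (2*j) ys) *
        (if ml_decode j C (data_outputs j ys) \<noteq> w then 1 else 0)) +
     (\<Prod>l\<in>{1..k}. 1 - T l (segment (2*l) ys)) *
        (if ml_decode (k + 1) C (data_outputs (k + 1) ys) \<noteq> w then 1 else 0)"

lemma sum_test_outcome_prob_stop_time:
  assumes ys: "length ys = nx L"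
  shows "(\<Sum>R\<in>test_outcomes. test_outcome_prob R * (real (nx 2) +
      (\<Sum>j\<in>{1..k}. real (nx (2*j + 2) - nx (2*j)) * (if j < stop_stage R ys then 1 else 0))))
    = avg_stop_time ys"
proof -
  have "(\<Sum>R\<in>test_outcomes. test_outcome_prob R * (real (nx 2) +
      (\<Sum>j\<in>{1..k}. real (nx (2*j + 2) - nx (2*j)) * (if j < stop_stage R ys then 1 else 0))))
    = real (nx 2) * (\<Sum>R\<in>test_outcomes. test_outcome_prob R) +
      (\<Sum>j\<in>{1..k}. real (nx (2*j + 2) - nx (2*j)) *
        (\<Sum>R\<in>test_outcomes. test_outcome_prob R * (if j < stop_stage R ys then 1 else 0)))"
    by (simp add: distrib_left sum.distrib sum_distrib_left sum.swap[of _ test_outcomes] mult_ac)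
  then show ?thesis
    unfolding avg_stop_time_def
    by (simp add: sum_test_outcome_prob sum_test_outcome_prob_less_stop_stage[OF ys])
qed

lemma sum_test_outcome_prob_error:
  assumes ys: "length ys = nx L"
  shows "(\<Sum>R\<in>test_outcomes. test_outcome_prob R * (\<Sum>j\<in>{1..k + 1}. (if stop_stage R ys = j then 1 else 0) *
      (if ml_decode j C (data_outputs j ys) \<noteq> w then 1 else 0)))
    = avg_error C w ys"
proof -
  let ?P = "\<lambda>j. \<Sum>R\<in>test_outcomes. test_outcome_prob R * (if stop_stage R ys = j then 1 else 0)"
  have "stop_stage R ys = k + 1 \<longleftrightarrow> k < stop_stage R ys" for R
    using stop_stage(1)[of R ys] by auto
  then have last: "?P (k + 1) = (\<Prod>l\<in>{1..k}. 1 - T l (segment (2*l) ys))"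
    using sum_test_outcome_prob_less_stop_stage[OF ys, of k] by simp
  have "(\<Sum>R\<in>test_outcomes. test_outcome_prob R * (\<Sum>j\<in>{1..k + 1}. (if stop_stage R ys = j then 1 else 0) *
      (if ml_decode j C (data_outputs j ys) \<noteq> w then 1 else 0)))
    = (\<Sum>R\<in>test_outcomes. \<Sum>j\<in>{1..k + 1}. test_outcome_prob R * (if stop_stage R ys = j then 1 else 0) *
      (if ml_decode j C (data_outputs j ys) \<noteq> w then 1 else 0))"
    by (simp only: sum_distrib_left mult.assoc)
  also have "\<dots> = (\<Sum>j\<in>{1..k + 1}. ?P j * (if ml_decode j C (data_outputs j ys) \<noteq> w then 1 else 0))"
    by (subst sum.swap) (simp add: sum_distrib_right)
  also have "\<dots> = ?P (k + 1) * (if ml_decode (k + 1) C (data_outputs (k + 1) ys) \<noteq> w then 1 else 0) +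
      (\<Sum>j\<in>{1..k}. ?P j * (if ml_decode j C (data_outputs j ys) \<noteq> w then 1 else 0))"
    by (simp add: atLeastAtMostSuc_conv)
  also have "\<dots> = avg_error C w ys"
    unfolding avg_error_def last
    by (simp add: sum_test_outcome_prob_stop_stage_eq[OF ys] cong: sum.cong_simp)
  finally show ?thesis .
qed

lemma sum_out_prob_avg_error_le:
  assumes C: "C \<in> codebooks" and w: "w \<in> {1..M}"
  shows "(\<Sum>ys\<in>seqs (nx L). out_prob C w (nx L) ys * avg_error C w ys) \<le>
    (\<Sum>j\<in>{1..k}. (\<Prod>l\<in>{1..<j}. cont_bound l) * beta j * data_error j C w) +
    (\<Prod>l\<in>{1..k}. cont_bound l) * data_error (k + 1) C w"
proof -
  have c: "length (C w) = code_len"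
    using length_codeword[OF C w] .
  have reject_nonneg: "0 \<le> 1 - T l z" for l z
    using T_range[of l z] by simp
  have stage: "(\<Sum>ys\<in>seqs (nx L). out_prob C w (nx L) ys *
      ((\<Prod>l\<in>{1..<j}. 1 - T l (segment (2*l) ys)) * T j (segment (2*j) ys) *
       (if ml_decode j C (data_outputs j ys) \<noteq> w then 1 else 0)))
    \<le> (\<Prod>l\<in>{1..<j}. cont_bound l) * beta j * data_error j C w" if j: "1 \<le> j" "j \<le> k" for j
  proof -
    have "(\<Sum>ys\<in>seqs (nx L). out_prob C w (nx L) ys *
      ((\<Prod>l\<in>{1..<j}. 1 - T l (segment (2*l) ys)) * T j (segment (2*j) ys) *
       (if ml_decode j C (data_outputs j ys) \<noteq> w then 1 else 0)))
      \<le> (\<Prod>l\<in>{1..<j}. cont_bound l) * (\<Sum>x\<in>seqs (data_len j). chan_n W (take (data_len j) (C w)) x *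
          (\<Sum>z\<in>seqs (seg_len (2*j)). chan_pow W (if ml_decode j C x = w then xA else xR) z *
             (T j z * (if ml_decode j C x \<noteq> w then 1 else 0))))"
      using sum_out_prob_test_stage_le[where C = C and w = w and \<phi> = "\<lambda>l z. 1 - T l z"
          and \<theta> = cont_bound and G = "\<lambda>x z. T j z * (if ml_decode j C x \<noteq> w then 1 else 0)", OF j c]
        reject_nonneg sum_control_reject_le j T_range
      by (simp add: mult_ac)
    also have "\<dots> = (\<Prod>l\<in>{1..<j}. cont_bound l) * beta j * data_error j C w"
    proof -
      have "(\<Sum>z\<in>seqs (seg_len (2*j)). chan_pow W (if ml_decode j C x = w then xA else xR) z *
          (T j z * (if ml_decode j C x \<noteq> w then 1 else 0))) = beta j * (if ml_decode j C x \<noteq> w then 1 else 0)" for x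
        by (cases "ml_decode j C x = w") (simp_all add: beta_def)
      then show ?thesis
        unfolding data_error_def by (simp add: sum_distrib_left mult_ac)
    qed
    finally show ?thesis .
  qed
  have final: "(\<Sum>ys\<in>seqs (nx L). out_prob C w (nx L) ys *
      ((\<Prod>l\<in>{1..k}. 1 - T l (segment (2*l) ys)) *
       (if ml_decode (k + 1) C (data_outputs (k + 1) ys) \<noteq> w then 1 else 0)))
    \<le> (\<Prod>l\<in>{1..k}. cont_bound l) * data_error (k + 1) C w"
    using sum_out_prob_stage_le[of "k + 1" C w "\<lambda>l z. 1 - T l z" cont_bound
        "\<lambda>x. if ml_decode (k + 1) C x \<noteq> w then 1 else 0"]
      c k_pos L_eq reject_nonneg sum_control_reject_le
    unfolding data_error_def by (simp add: atLeastLessThanSuc_atLeastAtMost)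
  show ?thesis
    unfolding avg_error_def distrib_left sum.distrib sum_distrib_left
    by (subst sum.swap) (intro add_mono sum_mono stage final; simp)
qed

lemma sum_out_prob_avg_stop_time_le:
  assumes C: "C \<in> codebooks" and w: "w \<in> {1..M}"
  shows "(\<Sum>ys\<in>seqs (nx L). out_prob C w (nx L) ys * avg_stop_time ys) \<le>
    real (nx 2) + (\<Sum>j\<in>{1..k}. real (nx (2*j + 2) - nx (2*j)) *
      ((\<Prod>l\<in>{1..<j}. cont_bound l) * (eps j + (1 - beta j) * data_error j C w)))"
proof -
  have c: "length (C w) = code_len"
    using length_codeword[OF C w] .
  have reject_nonneg: "0 \<le> 1 - T l z" for l z
    using T_range[of l z] by simp
  have stage: "(\<Sum>ys\<in>seqs (nx L). out_prob C w (nx L) ys * (\<Prod>l\<in>{1..j}. 1 - T l (segment (2*l) ys)))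
    \<le> (\<Prod>l\<in>{1..<j}. cont_bound l) * (eps j + (1 - beta j) * data_error j C w)" if j: "1 \<le> j" "j \<le> k" for j
  proof -
    have reject_le: "(\<Sum>z\<in>seqs (seg_len (2*j)). chan_pow W (if ml_decode j C x = w then xA else xR) z * (1 - T j z))
        \<le> eps j + (1 - beta j) * (if ml_decode j C x \<noteq> w then 1 else 0)" for x
      using T_type_I[OF j] sum_chan_pow_xR_reject[of j] eps_nonneg[OF j] by auto
    have "{1..j} = insert j {1..<j}"
      using j by auto
    then have "(\<Sum>ys\<in>seqs (nx L). out_prob C w (nx L) ys * (\<Prod>l\<in>{1..j}. 1 - T l (segment (2*l) ys)))
      \<le> (\<Prod>l\<in>{1..<j}. cont_bound l) * (\<Sum>x\<in>seqs (data_len j). chan_n W (take (data_len j) (C w)) x *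
          (\<Sum>z\<in>seqs (seg_len (2*j)). chan_pow W (if ml_decode j C x = w then xA else xR) z * (1 - T j z)))"
      using sum_out_prob_test_stage_le[where C = C and w = w and \<phi> = "\<lambda>l z. 1 - T l z"
          and \<theta> = cont_bound and G = "\<lambda>x z. 1 - T j z", OF j c]
        reject_nonneg sum_control_reject_le j
      by (simp add: mult_ac)
    also have "\<dots> \<le> (\<Prod>l\<in>{1..<j}. cont_bound l) * (\<Sum>x\<in>seqs (data_len j). chan_n W (take (data_len j) (C w)) x *
          (eps j + (1 - beta j) * (if ml_decode j C x \<noteq> w then 1 else 0)))"
      using j by (intro mult_left_mono sum_mono prod_cont_bound_nonneg chan_n_nonneg W_nonneg reject_le) auto
    also have "\<dots> = (\<Prod>l\<in>{1..<j}. cont_bound l) * (eps j + (1 - beta j) * data_error j C w)"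
      using sum_chan_n[of W, OF W_sum, of "take (data_len j) (C w)" "data_len j"] c data_len_le_code_len[of j] j
      unfolding data_error_def by (simp add: distrib_left sum.distrib sum_distrib_left[symmetric] mult_ac)
    finally show ?thesis .
  qed
  have "(\<Sum>ys\<in>seqs (nx L). out_prob C w (nx L) ys * avg_stop_time ys) =
    real (nx 2) + (\<Sum>j\<in>{1..k}. real (nx (2*j + 2) - nx (2*j)) *
      (\<Sum>ys\<in>seqs (nx L). out_prob C w (nx L) ys * (\<Prod>l\<in>{1..j}. 1 - T l (segment (2*l) ys))))"
  proof -
    have "(\<Sum>ys\<in>seqs (nx L). real (nx 2) * out_prob C w (nx L) ys) = real (nx 2)"
      using sum_out_prob_total[of C w] by (simp add: sum_distrib_left[symmetric])
    then show ?thesis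
      unfolding avg_stop_time_def
      by (simp add: distrib_left sum.distrib sum_distrib_left sum.swap[of _ "seqs (nx L)"] mult_ac)
  qed
  also have "\<dots> \<le> real (nx 2) + (\<Sum>j\<in>{1..k}. real (nx (2*j + 2) - nx (2*j)) *
      ((\<Prod>l\<in>{1..<j}. cont_bound l) * (eps j + (1 - beta j) * data_error j C w)))"
    by (intro add_left_mono sum_mono mult_left_mono stage) auto
  finally show ?thesis .
qed

text \<open>The common randomness is a codebook together with a test outcome; since a code draws it from a
  set of natural numbers, the lemmas below go through an enumeration \<open>h\<close> of these pairs.\<close>

definition common_rand :: "((nat \<Rightarrow> 'x list) \<times> (nat \<times> 'y list \<Rightarrow> bool)) set" where
  "common_rand = codebooks \<times> test_outcomes"

definition common_rand_prob :: "(nat \<Rightarrow> 'x list) \<times> (nat \<times> 'y list \<Rightarrow> bool) \<Rightarrow> real" where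
  "common_rand_prob u = codebook_prob (fst u) * test_outcome_prob (snd u)"

abbreviation code_prob :: "('u \<Rightarrow> (nat \<Rightarrow> 'x list) \<times> (nat \<times> 'y list \<Rightarrow> bool)) \<Rightarrow> 'u \<Rightarrow> real" where
  "code_prob h \<equiv> \<lambda>u. common_rand_prob (h u)"

abbreviation code_encoder ::
    "('u \<Rightarrow> (nat \<Rightarrow> 'x list) \<times> (nat \<times> 'y list \<Rightarrow> bool)) \<Rightarrow> nat \<Rightarrow> 'u \<Rightarrow> nat \<Rightarrow> 'y list \<Rightarrow> 'x" where
  "code_encoder h \<equiv> \<lambda>tm u w p. encoder tm (fst (h u)) w p"

lemma finite_common_rand: "finite common_rand"
  unfolding common_rand_def using finite_codebooks finite_test_outcomes by simp

lemma sum_joint_prob_eq: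
  assumes h: "bij_betw h {0..<N} common_rand"
    and F: "\<And>u w ys. u < N \<Longrightarrow> length ys = nx L \<Longrightarrow> F u w ys = G (fst (h u)) (snd (h u)) w ys"
  shows "(\<Sum>u\<in>{0..<N}. \<Sum>w\<in>{1..M}. \<Sum>ys\<in>seqs (n L).
      joint_prob W L n M (code_prob h) (code_encoder h) u w ys * F u w ys)
    = code_avg (\<lambda>C w. \<Sum>ys\<in>seqs (nx L). out_prob C w (nx L) ys *
        (\<Sum>R\<in>test_outcomes. test_outcome_prob R * G C R w ys))"
proof -
  define S where "S v = common_rand_prob v * (1 / real M * (\<Sum>w\<in>{1..M}. \<Sum>ys\<in>seqs (nx L).
      out_prob (fst v) w (nx L) ys * G (fst v) (snd v) w ys))" for v
  have "joint_prob W L n M (code_prob h) (code_encoder h) u w ys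
      = common_rand_prob (h u) * (1 / real M) * out_prob (fst (h u)) w (nx L) ys" for u w ys
    unfolding joint_prob_def enc_in_def path_prob_def nx_L ..
  then have "(\<Sum>u\<in>{0..<N}. \<Sum>w\<in>{1..M}. \<Sum>ys\<in>seqs (n L).
      joint_prob W L n M (code_prob h) (code_encoder h) u w ys * F u w ys)
    = (\<Sum>u\<in>{0..<N}. S (h u))"
    unfolding S_def using F by (simp add: nx_L sum_distrib_left mult_ac cong: sum.cong_simp)
  also have "\<dots> = (\<Sum>v\<in>common_rand. S v)"
    by (rule sum.reindex_bij_betw[OF h])
  also have "\<dots> = (\<Sum>C\<in>codebooks. \<Sum>R\<in>test_outcomes. S (C, R))"
    unfolding common_rand_def sum.cartesian_product by simp
  also have "\<dots> = code_avg (\<lambda>C w. \<Sum>ys\<in>seqs (nx L). out_prob C w (nx L) ys *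
        (\<Sum>R\<in>test_outcomes. test_outcome_prob R * G C R w ys))"
    unfolding code_avg_def S_def common_rand_prob_def sum_swap_weighted[symmetric]
    by (simp add: sum_distrib_left mult_ac)
  finally show ?thesis .
qed

lemma exp_tau_eq:
  assumes h: "bij_betw h {0..<N} common_rand"
  shows "exp_tau W L n M {0..<N} (code_prob h) (code_encoder h) (code_stop h)
    = code_avg (\<lambda>C w. \<Sum>ys\<in>seqs (nx L). out_prob C w (nx L) ys * avg_stop_time ys)"
proof -
  let ?G = "\<lambda>C R w ys. real (nx 2) +
    (\<Sum>j\<in>{1..k}. real (nx (2*j + 2) - nx (2*j)) * (if j < stop_stage R ys then 1 else 0))"
  have "real (n (stop_idx L n (code_stop h) u ys)) = ?G (fst (h u)) (snd (h u)) w ys"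
    if "length ys = nx L" for u w ys
    by (rule stop_time_eq[where h = h and u = u and C = "fst (h u)", OF that]) simp
  then have "exp_tau W L n M {0..<N} (code_prob h) (code_encoder h) (code_stop h)
    = code_avg (\<lambda>C w. \<Sum>ys\<in>seqs (nx L). out_prob C w (nx L) ys *
        (\<Sum>R\<in>test_outcomes. test_outcome_prob R * ?G C R w ys))"
    unfolding exp_tau_def by (intro sum_joint_prob_eq[OF h]) simp
  also have "\<dots> = code_avg (\<lambda>C w. \<Sum>ys\<in>seqs (nx L). out_prob C w (nx L) ys * avg_stop_time ys)"
    by (intro arg_cong[where f = code_avg] ext sum.cong refl arg_cong2[where f = "(*)"]
        sum_test_outcome_prob_stop_time) simp
  finally show ?thesis .
qed

lemma err_prob_eq:
  assumes h: "bij_betw h {0..<N} common_rand"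
  shows "err_prob W L n M {0..<N} (code_prob h) (code_encoder h) (code_stop h) (code_decoder h)
    = code_avg (\<lambda>C w. \<Sum>ys\<in>seqs (nx L). out_prob C w (nx L) ys * avg_error C w ys)"
proof -
  let ?G = "\<lambda>C R w ys. \<Sum>j\<in>{1..k + 1}. (if stop_stage R ys = j then 1 else 0) *
    (if ml_decode j C (data_outputs j ys) \<noteq> w then 1 else 0 :: real)"
  have "(let i = stop_idx L n (code_stop h) u ys in
      if decoder i (h u) (take (n i) ys) \<noteq> w then 1 else 0) = ?G (fst (h u)) (snd (h u)) w ys"
    if "length ys = nx L" for u w ys
    by (rule error_indicator_eq[where h = h and u = u, OF that]) simp
  then have "err_prob W L n M {0..<N} (code_prob h) (code_encoder h) (code_stop h) (code_decoder h)
    = code_avg (\<lambda>C w. \<Sum>ys\<in>seqs (nx L). out_prob C w (nx L) ys *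
        (\<Sum>R\<in>test_outcomes. test_outcome_prob R * ?G C R w ys))"
    unfolding err_prob_def by (intro sum_joint_prob_eq[OF h]) simp
  also have "\<dots> = code_avg (\<lambda>C w. \<Sum>ys\<in>seqs (nx L). out_prob C w (nx L) ys * avg_error C w ys)"
    by (intro arg_cong[where f = code_avg] ext sum.cong refl arg_cong2[where f = "(*)"]
        sum_test_outcome_prob_error) simp
  finally show ?thesis .
qed

lemma exp_tau_le:
  assumes h: "bij_betw h {0..<N} common_rand"
  shows "exp_tau W L n M {0..<N} (code_prob h) (code_encoder h) (code_stop h)
    \<le> real (nx 2) + (\<Sum>j\<in>{1..k}. real (nx (2*j + 2) - nx (2*j)) *
      (rcu W PX (data_len j) M * (1 - beta j) + eps j) * (\<Prod>l\<in>{1..<j}. cont_bound l))"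
proof -
  have "exp_tau W L n M {0..<N} (code_prob h) (code_encoder h) (code_stop h)
    \<le> code_avg (\<lambda>C w. real (nx 2) + (\<Sum>j\<in>{1..k}. real (nx (2*j + 2) - nx (2*j)) *
      ((\<Prod>l\<in>{1..<j}. cont_bound l) * (eps j + (1 - beta j) * data_error j C w))))"
    unfolding exp_tau_eq[OF h] by (intro code_avg_mono sum_out_prob_avg_stop_time_le)
  also have "\<dots> = real (nx 2) + (\<Sum>j\<in>{1..k}. real (nx (2*j + 2) - nx (2*j)) *
      ((\<Prod>l\<in>{1..<j}. cont_bound l) * (eps j + (1 - beta j) * code_avg (data_error j))))"
    by (simp add: code_avg_add code_avg_const code_avg_cmult code_avg_sum)
  also have "\<dots> \<le> real (nx 2) + (\<Sum>j\<in>{1..k}. real (nx (2*j + 2) - nx (2*j)) *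
      ((\<Prod>l\<in>{1..<j}. cont_bound l) * (eps j + (1 - beta j) * rcu W PX (data_len j) M)))"
    using beta_range prod_cont_bound_nonneg
    by (intro add_left_mono sum_mono mult_left_mono code_avg_data_error_le_rcu) auto
  finally show ?thesis
    by (simp add: mult_ac add_ac)
qed

lemma err_prob_le:
  assumes h: "bij_betw h {0..<N} common_rand"
  shows "err_prob W L n M {0..<N} (code_prob h) (code_encoder h) (code_stop h) (code_decoder h)
    \<le> (\<Sum>j\<in>{1..k}. rcu W PX (data_len j) M * beta j * (\<Prod>l\<in>{1..<j}. cont_bound l)) +
      rcu W PX (data_len (k + 1)) M * (\<Prod>l\<in>{1..k}. cont_bound l)"
proof -
  have "err_prob W L n M {0..<N} (code_prob h) (code_encoder h) (code_stop h) (code_decoder h)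
    \<le> code_avg (\<lambda>C w. (\<Sum>j\<in>{1..k}. (\<Prod>l\<in>{1..<j}. cont_bound l) * beta j * data_error j C w) +
      (\<Prod>l\<in>{1..k}. cont_bound l) * data_error (k + 1) C w)"
    unfolding err_prob_eq[OF h] by (intro code_avg_mono sum_out_prob_avg_error_le)
  also have "\<dots> = (\<Sum>j\<in>{1..k}. (\<Prod>l\<in>{1..<j}. cont_bound l) * beta j * code_avg (data_error j)) +
      (\<Prod>l\<in>{1..k}. cont_bound l) * code_avg (data_error (k + 1))"
    by (simp add: code_avg_add code_avg_cmult code_avg_sum)
  also have "\<dots> \<le> (\<Sum>j\<in>{1..k}. (\<Prod>l\<in>{1..<j}. cont_bound l) * beta j * rcu W PX (data_len j) M) +
      (\<Prod>l\<in>{1..k}. cont_bound l) * rcu W PX (data_len (k + 1)) M"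
    using beta_range prod_cont_bound_nonneg[of "k + 1"] prod_cont_bound_nonneg
    by (intro add_mono sum_mono mult_left_mono code_avg_data_error_le_rcu mult_nonneg_nonneg)
      (auto simp: atLeastLessThanSuc_atLeastAtMost)
  finally show ?thesis
    by (simp add: mult_ac)
qed

lemma vlbf_valid:
  assumes h: "bij_betw h {0..<N} common_rand"
  shows "vlbf_valid L n M {0..<N} (code_prob h) (code_decoder h)"
proof -
  have "(\<Sum>u\<in>{0..<N}. common_rand_prob (h u)) = (\<Sum>v\<in>common_rand. common_rand_prob v)"
    by (rule sum.reindex_bij_betw[OF h])
  also have "\<dots> = (\<Sum>C\<in>codebooks. \<Sum>R\<in>test_outcomes. codebook_prob C * test_outcome_prob R)"
    unfolding common_rand_def common_rand_prob_def sum.cartesian_product by (simp add: split_def)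
  also have "\<dots> = 1"
    by (simp add: sum_product[symmetric] sum_test_outcome_prob sum_codebook_prob)
  finally show ?thesis
    unfolding vlbf_valid_def common_rand_prob_def decoder_def
    using ml_decode codebook_prob_nonneg test_outcome_prob_nonneg by auto
qed

lemma vlbf_code_exists:
  assumes \<beta>': "\<And>l. 1 \<le> l \<Longrightarrow> l \<le> k \<Longrightarrow> \<beta>' l = beta l"
  defines "p \<equiv> \<lambda>i. if i = 0 then 1 else max (eps i) (1 - \<beta>' i)"
  shows "\<exists>(Us :: nat set) PU (f :: nat \<Rightarrow> nat \<Rightarrow> nat \<Rightarrow> 'y list \<Rightarrow> 'x) stop g.
    is_vlbf_code W
      (real (nx 2) + (\<Sum>j = 1..k. real (nx (2*j + 2) - nx (2*j)) *
         (rcu W PX (data_len j) M * (1 - \<beta>' j) + eps j) * (\<Prod>i = 0..<j. p i)))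
      L M
      ((\<Sum>j = 1..k. rcu W PX (data_len j) M * \<beta>' j * (\<Prod>i = 0..<j. p i)) +
       rcu W PX (data_len (k + 1)) M * (\<Prod>i = 0..k. p i))
      n Us PU f stop g"
proof -
  have p: "(\<Prod>i = 0..<j. p i) = (\<Prod>l\<in>{1..<j}. cont_bound l)" if "j \<le> k + 1" for j
  proof -
    have "{0..<j} = (if j = 0 then {} else insert 0 {1..<j})"
      by auto
    then have "(\<Prod>i = 0..<j. p i) = (\<Prod>i\<in>{1..<j}. p i)"
      by (simp add: p_def)
    also have "\<dots> = (\<Prod>l\<in>{1..<j}. cont_bound l)"
      using that \<beta>' by (intro prod.cong) (auto simp: p_def cont_bound_def)
    finally show ?thesis .
  qed
  have bounds: "(\<Sum>j = 1..k. real (nx (2*j + 2) - nx (2*j)) *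
         (rcu W PX (data_len j) M * (1 - \<beta>' j) + eps j) * (\<Prod>i = 0..<j. p i)) =
      (\<Sum>j\<in>{1..k}. real (nx (2*j + 2) - nx (2*j)) *
         (rcu W PX (data_len j) M * (1 - beta j) + eps j) * (\<Prod>l\<in>{1..<j}. cont_bound l))"
    "(\<Sum>j = 1..k. rcu W PX (data_len j) M * \<beta>' j * (\<Prod>i = 0..<j. p i)) =
      (\<Sum>j\<in>{1..k}. rcu W PX (data_len j) M * beta j * (\<Prod>l\<in>{1..<j}. cont_bound l))"
    using \<beta>' p by (auto intro!: sum.cong)
  have last: "(\<Prod>i = 0..k. p i) = (\<Prod>l\<in>{1..k}. cont_bound l)"
    using p[of "k + 1"] by (simp add: atLeastLessThanSuc_atLeastAtMost)
  obtain h where "bij_betw h {0..<card common_rand} common_rand"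
    using ex_bij_betw_nat_finite[OF finite_common_rand] by blast
  note code = vlbf_valid[OF this] exp_tau_le[OF this] err_prob_le[OF this]
  show ?thesis
    unfolding is_vlbf_code_def bounds last by (intro exI conjI) (rule code)+
qed

end

theorem theorem1:
  fixes W :: "'x::finite \<Rightarrow> 'y::finite \<Rightarrow> real"
    and PX :: "'x \<Rightarrow> real"
    and xA xR :: 'x
    and L M :: nat
    and n :: "nat \<Rightarrow> nat"
    and eps :: "nat \<Rightarrow> real"
  assumes L: "odd L" "L \<ge> 3"
    and W_nonneg: "\<And>x y. 0 \<le> W x y"
    and W_sum: "\<And>x. (\<Sum>y\<in>UNIV. W x y) = 1"
    and PX_nonneg: "\<And>x. 0 \<le> PX x"
    and PX_sum: "(\<Sum>x\<in>UNIV. PX x) = 1"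
    and M: "M \<ge> 1"
    and n_pos: "n 1 \<ge> 1"
    and n_mono: "\<And>i. 1 \<le> i \<Longrightarrow> i < L \<Longrightarrow> n i < n (Suc i)"
    and eps: "\<And>i. 1 \<le> i \<Longrightarrow> i \<le> (L - 1) div 2 \<Longrightarrow> 0 < eps i \<and> eps i < 1"
  shows
    "let k = (L - 1) div 2;
         nx = (\<lambda>i. if i = 0 then 0 else if i \<le> L then n i else n L);
         \<beta> = (\<lambda>i. hyp_beta (seqs (nx (2*i) - nx (2*i - 1))) (eps i)
                    (chan_pow W xA) (chan_pow W xR));
         p = (\<lambda>i. if i = 0 then 1 else max (eps i) (1 - \<beta> i));
         s = (\<lambda>j. \<Sum>i=1..j. nx (2*i - 1) - nx (2*i - 2));
         Nb = real (nx 2) + (\<Sum>j=1..k. real (nx (2*j + 2) - nx (2*j)) *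
                 (rcu W PX (s j) M * (1 - \<beta> j) + eps j) * (\<Prod>i=0..<j. p i));
         Eb = (\<Sum>j=1..k. rcu W PX (s j) M * \<beta> j * (\<Prod>i=0..<j. p i))
              + rcu W PX (s (k + 1)) M * (\<Prod>i=0..k. p i)
     in \<exists>(Us::nat set) PU (f :: nat \<Rightarrow> nat \<Rightarrow> nat \<Rightarrow> 'y list \<Rightarrow> 'x) stop g.
          is_vlbf_code W Nb L M Eb n Us PU f stop g"
proof -
  interpret bursty_scheme W PX xA xR L M n
    using assms by unfold_locales
  have "0 \<le> eps l" if "1 \<le> l" "l \<le> k" for l
    using eps[of l] that unfolding k_def by auto
  then obtain T where T_range: "\<forall>l z. 0 \<le> T l z \<and> T l z \<le> 1" and T: "\<forall>l\<in>{1..k}.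
      (\<Sum>z\<in>seqs (seg_len (2*l)). chan_pow W xA z * (1 - T l z)) \<le> eps l \<and>
      (\<Sum>z\<in>seqs (seg_len (2*l)). chan_pow W xR z * T l z) =
        hyp_beta (seqs (seg_len (2*l))) (eps l) (chan_pow W xA) (chan_pow W xR)"
    using exists_optimal_tests by blast
  interpret tested_scheme W PX xA xR L M n eps T
    using T_range T by unfold_locales auto
  show ?thesis
    unfolding nx_def[symmetric] k_def[symmetric] Let_def
    unfolding data_len_def[symmetric]
    by (rule vlbf_code_exists) (use T in \<open>auto simp: beta_def seg_len_def\<close>)
qed

end
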